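(* Let $1\le p\le q<\infty$ and $k\in\mathbb{N}$. Let $\mathsf{M}_{p,q}(k)$ denote the least constant such that for every $n\ge k$, every function $f:\{-1,1\}^n\to\mathbb{R}$ of degree at most $k$ satisfies $\|f\|_q\le \mathsf{M}_{p,q}(k)\|f\|_p$. Then $\mathsf{M}_{p,q}(k)$ is also the least constant such that for every $n\ge k$, every function $f:\{-1,1\}^n\to\mathbb{R}$ satisfies $$\inf_{g\in \mathscr{P}^n_{>k}} \|f-g\|_{p^\ast} \leq \mathsf{M}_{p,q}(k) \inf_{g\in \mathscr{P}^n_{>k}} \|f-g\|_{q^\ast},$$ where for $r\in[1,\infty]$ the conjugate exponent $r^\ast$ is defined by $\frac1{r^\ast}+\frac1r=1$.
   Context: Every $f:\{-1,1\}^n\to\mathbb{R}$ has a unique Fourier–Walsh expansion $f=\sum_{S\subseteq\{1,\dots,n\}}\widehat f(S)w_S$, where $w_S(x)=\prod_{i\in S}x_i$. $f$ has degree at most $k$ if $\widehat f(S)=0$ whenever $|S|>k$. The $k$-th tail space is $\mathscr{P}^n_{>k}=\{f:\{-1,1\}^n\to\mathbb{R}:\ \widehat f(S)=0 \text{ whenever } |S|\le k\}$. For $r\in[1,\infty]$, $\|\cdot\|_r$ denotes the $L_r$ norm on $\{-1,1\}^n$ with respect to the uniform probability measure. *)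

theory Defs
  imports "HOL-Analysis.Analysis"
begin

text \<open>The discrete cube {-1,1}^n: points are functions on nat, with coordinates
  0..n-1 in {-1,1} and all other coordinates fixed to 1.\<close>
definition cube :: "nat \<Rightarrow> (nat \<Rightarrow> real) set" where
  "cube n = {x. (\<forall>i<n. x i = -1 \<or> x i = 1) \<and> (\<forall>i\<ge>n. x i = 1)}"

definition walsh :: "nat set \<Rightarrow> (nat \<Rightarrow> real) \<Rightarrow> real" where
  "walsh S x = (\<Prod>i\<in>S. x i)"

definition fcoeff :: "nat \<Rightarrow> ((nat \<Rightarrow> real) \<Rightarrow> real) \<Rightarrow> nat set \<Rightarrow> real" where
  "fcoeff n f S = (\<Sum>x\<in>cube n. f x * walsh S x) / 2 ^ n"

definition deg_le :: "nat \<Rightarrow> nat \<Rightarrow> ((nat \<Rightarrow> real) \<Rightarrow> real) \<Rightarrow> bool" where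
  "deg_le n k f \<longleftrightarrow> (\<forall>S. S \<subseteq> {..<n} \<longrightarrow> card S > k \<longrightarrow> fcoeff n f S = 0)"

definition tail_space :: "nat \<Rightarrow> nat \<Rightarrow> ((nat \<Rightarrow> real) \<Rightarrow> real) set" where
  "tail_space n k = {f. \<forall>S. S \<subseteq> {..<n} \<longrightarrow> card S \<le> k \<longrightarrow> fcoeff n f S = 0}"

definition lnorm :: "nat \<Rightarrow> ereal \<Rightarrow> ((nat \<Rightarrow> real) \<Rightarrow> real) \<Rightarrow> real" where
  "lnorm n r f = (case r of
      ereal r' \<Rightarrow> ((\<Sum>x\<in>cube n. \<bar>f x\<bar> powr r') / 2 ^ n) powr (1 / r')
    | PInfty \<Rightarrow> Max ((\<lambda>x. \<bar>f x\<bar>) ` cube n)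
    | MInfty \<Rightarrow> 0)"

definition conj_exp :: "real \<Rightarrow> ereal" where
  "conj_exp r = (if r = 1 then \<infinity> else ereal (r / (r - 1)))"

definition tail_dist :: "nat \<Rightarrow> nat \<Rightarrow> ereal \<Rightarrow> ((nat \<Rightarrow> real) \<Rightarrow> real) \<Rightarrow> real" where
  "tail_dist n k r f = (INF g\<in>tail_space n k. lnorm n r (\<lambda>x. f x - g x))"

definition least_elem :: "real set \<Rightarrow> real \<Rightarrow> bool" where
  "least_elem A M \<longleftrightarrow> M \<in> A \<and> (\<forall>C\<in>A. M \<le> C)"

end

theory Submission
  imports Defs
begin

(* Both inequalities are read off one duality. A function h of degree at most k is orthogonal
   to the tail space, so pairing with f - g and Hoelder's inequality give
   E[f h] <= dist_r(f) |h|_{r*} (weak duality); conversely, Hahn-Banach yields for every f an h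
   of degree at most k with |h|_p <= 1 and E[f h] = dist_{p*}(f) (strong duality). Strong duality
   turns a bound |h|_q <= C |h|_p into dist_{p*} <= C dist_{q*}, and weak duality applied to a
   norming function of |h|_q turns it back, so both sets of admissible constants coincide. They
   form a closed set, nonempty by Bonami's lemma |h|_4 <= sqrt 3^k |h|_2 iterated on powers of h
   together with |h|_2 <= 3^k |h|_1, hence have a least element. *)

section \<open>The discrete cube and Walsh functions\<close>

lemma cube_0: "cube 0 = {\<lambda>_. 1}"
  unfolding cube_def by auto

lemma cube_Suc: "cube (Suc n) = (\<lambda>(x, s). x(n := s)) ` (cube n \<times> {-1, 1})"
proof
  show "cube (Suc n) \<subseteq> (\<lambda>(x, s). x(n := s)) ` (cube n \<times> {-1, 1})"
  proof
    fix y assume y: "y \<in> cube (Suc n)"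
    have "y(n := 1) \<in> cube n" using y unfolding cube_def by simp
    moreover have "y n \<in> {-1, 1}" using y unfolding cube_def by simp
    moreover have "y = (\<lambda>(x, s). x(n := s)) (y(n := 1), y n)" by simp
    ultimately show "y \<in> (\<lambda>(x, s). x(n := s)) ` (cube n \<times> {-1, 1})" by blast
  qed
next
  show "(\<lambda>(x, s). x(n := s)) ` (cube n \<times> {-1, 1}) \<subseteq> cube (Suc n)"
  proof clarify
    fix x and s :: real assume x: "x \<in> cube n" and s: "s \<in> {-1, 1}"
    show "x(n := s) \<in> cube (Suc n)"
      unfolding cube_def
    proof (intro CollectI conjI allI impI)
      fix i assume "i < Suc n"
      then show "(x(n := s)) i = -1 \<or> (x(n := s)) i = 1"
        using x s unfolding cube_def by (cases "i = n") auto
    next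
      fix i assume "Suc n \<le> i"
      then show "(x(n := s)) i = 1" using x unfolding cube_def by auto
    qed
  qed
qed

lemma inj_on_cube_Suc: "inj_on (\<lambda>(x, s). x(n := s)) (cube n \<times> {-1, 1})"
proof (rule inj_onI, clarify)
  fix x s x' s'
  assume "x \<in> cube n" "x' \<in> cube n" and e: "x(n := s) = x'(n := s')"
  then have "x n = x' n" unfolding cube_def by simp
  then show "x = x' \<and> s = s'"
    using e by (metis fun_upd_idem fun_upd_same fun_upd_upd)
qed

lemma finite_cube [simp]: "finite (cube n)"
  by (induction n) (auto simp: cube_0 cube_Suc)

lemma card_cube: "card (cube n) = 2 ^ n"
proof (induction n)
  case (Suc n)
  have "card (cube (Suc n)) = card (cube n \<times> {-1::real, 1})"
    unfolding cube_Suc by (rule card_image[OF inj_on_cube_Suc])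
  then show ?case using Suc by (simp add: card_cartesian_product)
qed (simp add: cube_0)

lemma one_in_cube: "(\<lambda>_. 1) \<in> cube n"
  unfolding cube_def by auto

lemma cube_nonempty [simp]: "cube n \<noteq> {}"
  using one_in_cube by blast

lemma sum_cube_Suc:
  "(\<Sum>y\<in>cube (Suc n). F y) = (\<Sum>x\<in>cube n. F (x(n := 1)) + F (x(n := -1)))"
proof -
  have "(\<Sum>y\<in>cube (Suc n). F y) = (\<Sum>(x, s)\<in>cube n \<times> {-1, 1}. F (x(n := s)))"
    unfolding cube_Suc by (subst sum.reindex[OF inj_on_cube_Suc]) (simp add: case_prod_unfold)
  also have "\<dots> = (\<Sum>x\<in>cube n. \<Sum>s\<in>{-1, 1}. F (x(n := s)))"
    by (subst sum.cartesian_product) simp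
  finally show ?thesis by (simp add: add.commute)
qed

lemma cube_coord_square: "x \<in> cube n \<Longrightarrow> x i * x i = 1"
  unfolding cube_def by (cases "i < n") auto

lemma cube_flip: "x \<in> cube n \<Longrightarrow> i < n \<Longrightarrow> x(i := - x i) \<in> cube n"
  unfolding cube_def by auto

lemma walsh_empty [simp]: "walsh {} x = 1"
  by (simp add: walsh_def)

lemma walsh_upd: "i \<notin> S \<Longrightarrow> walsh S (x(i := s)) = walsh S x"
  unfolding walsh_def by (rule prod.cong) auto

lemma walsh_upd_insert: "finite S \<Longrightarrow> i \<notin> S \<Longrightarrow> walsh (insert i S) (x(i := s)) = s * walsh S x"
  using walsh_upd[of i S x s] unfolding walsh_def by simp

lemma walsh_mult:
  assumes "x \<in> cube n" "finite S" "finite T"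
  shows "walsh S x * walsh T x = walsh (sym_diff S T) x"
proof -
  have "walsh S x = (\<Prod>i\<in>S \<inter> T. x i) * (\<Prod>i\<in>S - T. x i)"
    unfolding walsh_def by (rule prod.Int_Diff[OF assms(2)])
  moreover have "walsh T x = (\<Prod>i\<in>S \<inter> T. x i) * (\<Prod>i\<in>T - S. x i)"
    unfolding walsh_def using prod.Int_Diff[OF assms(3), of _ S] by (simp add: Int_commute)
  moreover have "(\<Prod>i\<in>S \<inter> T. x i) * (\<Prod>i\<in>S \<inter> T. x i) = 1"
    by (simp add: prod.distrib[symmetric] cube_coord_square[OF assms(1)])
  moreover have "walsh (sym_diff S T) x = (\<Prod>i\<in>S - T. x i) * (\<Prod>i\<in>T - S. x i)"
    unfolding walsh_def by (rule prod.union_disjoint) (use assms in auto)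
  ultimately show ?thesis by (simp add: algebra_simps)
qed

lemma sum_walsh:
  assumes "S \<subseteq> {..<n}"
  shows "(\<Sum>x\<in>cube n. walsh S x) = (if S = {} then 2 ^ n else 0)"
proof (cases "S = {}")
  case False
  then obtain i where i: "i \<in> S" by auto
  have "i < n" "finite S" using i assms finite_subset by auto
  define flip where "flip x = x(i := - x i)" for x :: "nat \<Rightarrow> real"
  have "walsh S (flip x) = - walsh S x" for x
  proof -
    have "walsh S (flip x) = flip x i * walsh (S - {i}) (flip x)"
      unfolding walsh_def using prod.remove[OF \<open>finite S\<close> i] by simp
    also have "walsh (S - {i}) (flip x) = walsh (S - {i}) x"
      unfolding flip_def by (rule walsh_upd) simp
    also have "flip x i * walsh (S - {i}) x = - (x i * walsh (S - {i}) x)"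
      by (simp add: flip_def)
    also have "x i * walsh (S - {i}) x = walsh S x"
      unfolding walsh_def by (rule prod.remove[OF \<open>finite S\<close> i, symmetric])
    finally show ?thesis .
  qed
  then have "(\<Sum>x\<in>cube n. walsh S x) = - (\<Sum>x\<in>cube n. walsh S x)"
    using sum.reindex_bij_witness[where i=flip and j=flip and S="cube n" and T="cube n"
        and h="walsh S" and g="\<lambda>x. walsh S (flip x)"]
    by (simp add: flip_def cube_flip \<open>i < n\<close> sum_negf)
  then show ?thesis using False by simp
qed (simp add: card_cube)

lemma sum_walsh_kernel:
  assumes "x \<in> cube n" "y \<in> cube n"
  shows "(\<Sum>S\<in>Pow {..<n}. walsh S y * walsh S x) = (if y = x then 2 ^ n else 0)"
proof -
  have "(\<Sum>S\<in>Pow {..<n}. walsh S y * walsh S x)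
      = (\<Sum>S\<in>Pow {..<n}. (\<Prod>i\<in>S. y i * x i) * (\<Prod>i\<in>{..<n} - S. 1))"
    by (simp add: walsh_def prod.distrib)
  also have "\<dots> = (\<Prod>i<n. y i * x i + 1)"
    by (rule prod_add[symmetric]) simp
  also have "\<dots> = (if y = x then 2 ^ n else 0)"
  proof (cases "y = x")
    case False
    then obtain i where i: "y i \<noteq> x i" by auto
    have "i < n"
    proof (rule ccontr)
      assume "\<not> i < n"
      then show False using i assms unfolding cube_def by auto
    qed
    moreover have "y i * x i + 1 = 0"
      using i assms \<open>i < n\<close> unfolding cube_def by force
    ultimately show ?thesis using False by (auto intro: prod_zero)
  qed (simp add: cube_coord_square[OF assms(1)])
  finally show ?thesis .
qed

lemma fourier_expansion:
  assumes "x \<in> cube n"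
  shows "f x = (\<Sum>S\<in>Pow {..<n}. fcoeff n f S * walsh S x)"
proof -
  have "(\<Sum>S\<in>Pow {..<n}. fcoeff n f S * walsh S x)
      = (\<Sum>S\<in>Pow {..<n}. \<Sum>y\<in>cube n. f y * (walsh S y * walsh S x)) / 2 ^ n"
    unfolding fcoeff_def by (simp add: sum_divide_distrib sum_distrib_right mult.assoc)
  also have "\<dots> = (\<Sum>y\<in>cube n. f y * (\<Sum>S\<in>Pow {..<n}. walsh S y * walsh S x)) / 2 ^ n"
    by (subst sum.swap) (simp add: sum_distrib_left)
  also have "\<dots> = (\<Sum>y\<in>cube n. if y = x then f x * 2 ^ n else 0) / 2 ^ n"
    using sum_walsh_kernel[OF assms] by (intro arg_cong[where f="\<lambda>s. s / 2 ^ n"] sum.cong) auto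
  finally show ?thesis using assms by simp
qed

lemma fcoeff_walsh:
  assumes "S \<subseteq> {..<n}" "T \<subseteq> {..<n}"
  shows "fcoeff n (walsh S) T = (if S = T then 1 else 0)"
proof -
  have "finite S" "finite T" using assms finite_subset by auto
  then have "fcoeff n (walsh S) T = (\<Sum>x\<in>cube n. walsh (sym_diff S T) x) / 2 ^ n"
    unfolding fcoeff_def using walsh_mult by simp
  also have "\<dots> = (if S = T then 1 else 0)"
    using assms by (subst sum_walsh) (auto simp: Un_empty Diff_eq_empty_iff)
  finally show ?thesis .
qed

lemma deg_le_const: "deg_le n k (\<lambda>_. c)"
  unfolding deg_le_def
proof (intro allI impI)
  fix S assume "S \<subseteq> {..<n}" "k < card S"
  then have "fcoeff n (walsh {}) S = 0" using fcoeff_walsh[of "{}" n S] by auto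
  then show "fcoeff n (\<lambda>_. c) S = 0" by (simp add: fcoeff_def sum_distrib_left[symmetric])
qed

section \<open>Averages over the cube\<close>

definition cube_avg :: "nat \<Rightarrow> ((nat \<Rightarrow> real) \<Rightarrow> real) \<Rightarrow> real" where
  "cube_avg n F = (\<Sum>x\<in>cube n. F x) / 2 ^ n"

lemma cube_avg_0: "cube_avg 0 F = F (\<lambda>_. 1)"
  unfolding cube_avg_def cube_0 by simp

lemma cube_avg_Suc:
  "cube_avg (Suc n) F = (cube_avg n (\<lambda>x. F (x(n := 1))) + cube_avg n (\<lambda>x. F (x(n := -1)))) / 2"
  unfolding cube_avg_def sum_cube_Suc by (simp add: sum.distrib add_divide_distrib)

lemma cube_avg_cong: "(\<And>x. x \<in> cube n \<Longrightarrow> F x = G x) \<Longrightarrow> cube_avg n F = cube_avg n G"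
  unfolding cube_avg_def by (auto intro!: sum.cong)

lemma cube_avg_mono: "(\<And>x. x \<in> cube n \<Longrightarrow> F x \<le> G x) \<Longrightarrow> cube_avg n F \<le> cube_avg n G"
  unfolding cube_avg_def by (auto intro!: sum_mono divide_right_mono)

lemma cube_avg_nonneg: "(\<And>x. x \<in> cube n \<Longrightarrow> 0 \<le> F x) \<Longrightarrow> 0 \<le> cube_avg n F"
  unfolding cube_avg_def by (simp add: sum_nonneg)

lemma cube_avg_add: "cube_avg n (\<lambda>x. F x + G x) = cube_avg n F + cube_avg n G"
  unfolding cube_avg_def by (simp add: sum.distrib add_divide_distrib)

lemma cube_avg_diff: "cube_avg n (\<lambda>x. F x - G x) = cube_avg n F - cube_avg n G"
  unfolding cube_avg_def by (simp add: sum_subtractf diff_divide_distrib)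

lemma cube_avg_scale: "cube_avg n (\<lambda>x. c * F x) = c * cube_avg n F"
  unfolding cube_avg_def by (simp add: sum_distrib_left)

lemma cube_avg_divide: "cube_avg n (\<lambda>x. F x / c) = cube_avg n F / c"
  unfolding cube_avg_def by (simp add: sum_divide_distrib mult.commute)

lemma cube_avg_const: "cube_avg n (\<lambda>_. c) = c"
  unfolding cube_avg_def by (simp add: card_cube)

lemma cube_avg_eq_0_iff_nonneg:
  "(\<And>x. x \<in> cube n \<Longrightarrow> 0 \<le> F x) \<Longrightarrow> cube_avg n F = 0 \<longleftrightarrow> (\<forall>x\<in>cube n. F x = 0)"
  unfolding cube_avg_def by (simp add: sum_nonneg_eq_0_iff)

lemma cube_avg_Cauchy_Schwarz:
  "(cube_avg n (\<lambda>x. a x * b x))\<^sup>2 \<le> cube_avg n (\<lambda>x. (a x)\<^sup>2) * cube_avg n (\<lambda>x. (b x)\<^sup>2)"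
  using divide_right_mono[OF Cauchy_Schwarz_ineq_sum[of a b "cube n"], of "2 ^ n * 2 ^ n"]
  unfolding cube_avg_def by (simp add: power2_eq_square)

lemma cube_avg_Suc_split:
  assumes "\<And>x s. x \<in> cube n \<Longrightarrow> s \<in> {-1, 1} \<Longrightarrow> f (x(n := s)) = g x + s * h x"
  shows "cube_avg (Suc n) (\<lambda>x. F (f x)) = cube_avg n (\<lambda>x. (F (g x + h x) + F (g x - h x)) / 2)"
  using assms by (simp add: cube_avg_Suc cube_avg_add cube_avg_divide cong: cube_avg_cong)

section \<open>Low-degree Walsh polynomials and the tail space\<close>

definition low_sets :: "nat \<Rightarrow> nat \<Rightarrow> nat set set" where
  "low_sets n k = {S. S \<subseteq> {..<n} \<and> card S \<le> k}"

lemma finite_low_sets [simp]: "finite (low_sets n k)"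
  unfolding low_sets_def by (rule finite_subset[of _ "Pow {..<n}"]) auto

text \<open>Unlike \<^const>\<open>deg_le\<close>, membership comes with an explicit Walsh expansion, which makes
  the class visibly stable under products and under fixing a coordinate.\<close>
definition walsh_polys :: "nat \<Rightarrow> nat \<Rightarrow> ((nat \<Rightarrow> real) \<Rightarrow> real) set" where
  "walsh_polys n k = {f. \<exists>c. \<forall>x\<in>cube n. f x = (\<Sum>S\<in>low_sets n k. c S * walsh S x)}"

lemma walsh_polys_cong:
  "f \<in> walsh_polys n k \<Longrightarrow> (\<And>x. x \<in> cube n \<Longrightarrow> g x = f x) \<Longrightarrow> g \<in> walsh_polys n k"
  unfolding walsh_polys_def by auto

lemma walsh_polys_add:
  assumes "f \<in> walsh_polys n k" "g \<in> walsh_polys n k"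
  shows "(\<lambda>x. f x + g x) \<in> walsh_polys n k"
proof -
  obtain c d where "\<forall>x\<in>cube n. f x = (\<Sum>S\<in>low_sets n k. c S * walsh S x)"
    and "\<forall>x\<in>cube n. g x = (\<Sum>S\<in>low_sets n k. d S * walsh S x)"
    using assms unfolding walsh_polys_def by auto
  then show ?thesis
    unfolding walsh_polys_def
    by (intro CollectI exI[of _ "\<lambda>S. c S + d S"]) (simp add: distrib_right sum.distrib)
qed

lemma walsh_polys_scale:
  assumes "f \<in> walsh_polys n k"
  shows "(\<lambda>x. a * f x) \<in> walsh_polys n k"
proof -
  obtain c where "\<forall>x\<in>cube n. f x = (\<Sum>S\<in>low_sets n k. c S * walsh S x)"
    using assms unfolding walsh_polys_def by auto
  then show ?thesis
    unfolding walsh_polys_def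
    by (intro CollectI exI[of _ "\<lambda>S. a * c S"]) (simp add: sum_distrib_left mult.assoc)
qed

lemma walsh_polys_sum:
  "finite A \<Longrightarrow> (\<And>i. i \<in> A \<Longrightarrow> F i \<in> walsh_polys n k) \<Longrightarrow> (\<lambda>x. \<Sum>i\<in>A. F i x) \<in> walsh_polys n k"
proof (induction A rule: finite_induct)
  case empty
  show ?case unfolding walsh_polys_def by (auto intro: exI[of _ "\<lambda>_. 0"])
next
  case (insert a A)
  then show ?case using walsh_polys_add[of "F a" n k "\<lambda>x. \<Sum>i\<in>A. F i x"] by simp
qed

lemma walsh_in_walsh_polys: "S \<subseteq> {..<n} \<Longrightarrow> card S \<le> k \<Longrightarrow> walsh S \<in> walsh_polys n k"
  unfolding walsh_polys_def
proof (intro CollectI exI[of _ "\<lambda>T. if T = S then 1 else 0"] ballI)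
  fix x assume "S \<subseteq> {..<n}" "card S \<le> k"
  then have "S \<in> low_sets n k" unfolding low_sets_def by auto
  have "(\<Sum>T\<in>low_sets n k. (if T = S then 1 else 0) * walsh T x)
      = (\<Sum>T\<in>low_sets n k. if T = S then walsh S x else 0)"
    by (rule sum.cong) auto
  then show "walsh S x = (\<Sum>T\<in>low_sets n k. (if T = S then 1 else 0) * walsh T x)"
    using \<open>S \<in> low_sets n k\<close> by simp
qed

lemma walsh_polys_mult:
  assumes "f \<in> walsh_polys n a" "g \<in> walsh_polys n b"
  shows "(\<lambda>x. f x * g x) \<in> walsh_polys n (a + b)"
proof -
  obtain c where c: "\<forall>x\<in>cube n. f x = (\<Sum>S\<in>low_sets n a. c S * walsh S x)"
    using assms(1) unfolding walsh_polys_def by auto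
  obtain d where d: "\<forall>x\<in>cube n. g x = (\<Sum>T\<in>low_sets n b. d T * walsh T x)"
    using assms(2) unfolding walsh_polys_def by auto
  have fin: "finite S" if "S \<in> low_sets n m" for S m
    using that unfolding low_sets_def by (auto intro: finite_subset)
  have "(\<lambda>x. \<Sum>S\<in>low_sets n a. \<Sum>T\<in>low_sets n b. c S * d T * walsh (sym_diff S T) x)
      \<in> walsh_polys n (a + b)"
  proof (intro walsh_polys_sum walsh_polys_scale walsh_in_walsh_polys finite_low_sets)
    fix S T assume S: "S \<in> low_sets n a" and T: "T \<in> low_sets n b"
    show "sym_diff S T \<subseteq> {..<n}" using S T unfolding low_sets_def by auto
    have "card (sym_diff S T) \<le> card (S - T) + card (T - S)" by (rule card_Un_le)
    also have "\<dots> \<le> card S + card T" using fin[OF S] fin[OF T] by (intro add_mono card_mono) auto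
    finally show "card (sym_diff S T) \<le> a + b" using S T unfolding low_sets_def by auto
  qed
  then show ?thesis
  proof (rule walsh_polys_cong)
    fix x assume x: "x \<in> cube n"
    have "f x * g x = (\<Sum>S\<in>low_sets n a. \<Sum>T\<in>low_sets n b. c S * d T * (walsh S x * walsh T x))"
      using x c d by (simp add: sum_product ac_simps)
    also have "\<dots> = (\<Sum>S\<in>low_sets n a. \<Sum>T\<in>low_sets n b. c S * d T * walsh (sym_diff S T) x)"
      using walsh_mult[OF x fin fin] by (intro sum.cong refl) simp
    finally show "f x * g x = \<dots>" .
  qed
qed

lemma deg_le_imp_walsh_polys: "deg_le n k f \<Longrightarrow> f \<in> walsh_polys n k"
  unfolding walsh_polys_def
proof (intro CollectI exI[of _ "fcoeff n f"] ballI)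
  fix x assume "deg_le n k f" "x \<in> cube n"
  then show "f x = (\<Sum>S\<in>low_sets n k. fcoeff n f S * walsh S x)"
    unfolding fourier_expansion[OF \<open>x \<in> cube n\<close>, of f]
    by (intro sum.mono_neutral_right) (auto simp: low_sets_def deg_le_def)
qed

lemma sum_walsh_upd_last:
  "(\<Sum>S\<in>low_sets (Suc n) k. c S * walsh S (x(n := s)))
     = (\<Sum>S\<in>low_sets n k. c S * walsh S x)
       + s * (\<Sum>S\<in>{S \<in> low_sets (Suc n) k. n \<in> S}. c S * walsh (S - {n}) x)"
proof -
  define L H where "L = low_sets (Suc n) k" and "H = {S \<in> L. n \<in> S}"
  have "L - H = low_sets n k"
    unfolding L_def H_def low_sets_def by (auto simp: less_Suc_eq)
  moreover have "(\<Sum>S\<in>L. c S * walsh S (x(n := s)))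
      = (\<Sum>S\<in>L - H. c S * walsh S (x(n := s))) + (\<Sum>S\<in>H. c S * walsh S (x(n := s)))"
    using sum.subset_diff[of H L] unfolding L_def H_def by simp
  moreover have "(\<Sum>S\<in>low_sets n k. c S * walsh S (x(n := s))) = (\<Sum>S\<in>low_sets n k. c S * walsh S x)"
  proof (intro sum.cong refl)
    fix S assume "S \<in> low_sets n k"
    then have "n \<notin> S" by (auto simp: low_sets_def)
    then show "c S * walsh S (x(n := s)) = c S * walsh S x" by (simp add: walsh_upd)
  qed
  moreover have "(\<Sum>S\<in>H. c S * walsh S (x(n := s))) = s * (\<Sum>S\<in>H. c S * walsh (S - {n}) x)"
    unfolding sum_distrib_left
  proof (intro sum.cong refl)
    fix S assume S: "S \<in> H"
    then have "finite S" "n \<in> S"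
      unfolding H_def L_def low_sets_def by (auto intro: finite_subset)
    then have "walsh S (x(n := s)) = s * walsh (S - {n}) x"
      using walsh_upd_insert[of "S - {n}" n x s] by (simp add: insert_absorb)
    then show "c S * walsh S (x(n := s)) = s * (c S * walsh (S - {n}) x)" by simp
  qed
  ultimately show ?thesis unfolding L_def H_def by simp
qed

lemma walsh_polys_Suc_split:
  assumes "f \<in> walsh_polys (Suc n) k"
  obtains g h where "g \<in> walsh_polys n k" "h \<in> walsh_polys n (k - 1)" "k = 0 \<Longrightarrow> h = (\<lambda>_. 0)"
    "\<And>x s. x \<in> cube n \<Longrightarrow> s \<in> {-1, 1} \<Longrightarrow> f (x(n := s)) = g x + s * h x"
proof -
  obtain c where c: "\<forall>y\<in>cube (Suc n). f y = (\<Sum>S\<in>low_sets (Suc n) k. c S * walsh S y)"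
    using assms unfolding walsh_polys_def by auto
  define H where "H = {S \<in> low_sets (Suc n) k. n \<in> S}"
  have H: "finite S" "n \<in> S" "S - {n} \<subseteq> {..<n}" "card (S - {n}) \<le> k - 1" if "S \<in> H" for S
    using that unfolding H_def low_sets_def by (auto simp: less_Suc_eq intro: finite_subset)
  have "finite H" unfolding H_def by simp
  show ?thesis
  proof
    show "(\<lambda>x. \<Sum>S\<in>low_sets n k. c S * walsh S x) \<in> walsh_polys n k"
      unfolding walsh_polys_def by blast
    show "(\<lambda>x. \<Sum>S\<in>H. c S * walsh (S - {n}) x) \<in> walsh_polys n (k - 1)"
      using \<open>finite H\<close> H(3,4) by (intro walsh_polys_sum walsh_polys_scale walsh_in_walsh_polys)
    show "(\<lambda>x. \<Sum>S\<in>H. c S * walsh (S - {n}) x) = (\<lambda>_. 0)" if "k = 0"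
    proof -
      have "card S = 0" if "S \<in> H" for S
        using that \<open>k = 0\<close> unfolding H_def low_sets_def by simp
      then have "H = {}" using H(1,2) card_0_eq by blast
      then show ?thesis by simp
    qed
    fix x and s :: real assume "x \<in> cube n" "s \<in> {-1, 1}"
    then have "x(n := s) \<in> cube (Suc n)" unfolding cube_Suc by auto
    then show "f (x(n := s)) = (\<Sum>S\<in>low_sets n k. c S * walsh S x) + s * (\<Sum>S\<in>H. c S * walsh (S - {n}) x)"
      using c sum_walsh_upd_last[where c=c and n=n and k=k and x=x and s=s] unfolding H_def by simp
  qed
qed

lemma walsh_in_tail_space: "S \<subseteq> {..<n} \<Longrightarrow> k < card S \<Longrightarrow> walsh S \<in> tail_space n k"
  unfolding tail_space_def
proof (intro CollectI allI impI)
  fix T assume "S \<subseteq> {..<n}" "k < card S" "T \<subseteq> {..<n}" "card T \<le> k"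
  then show "fcoeff n (walsh S) T = 0" using fcoeff_walsh[of S n T] by auto
qed

lemma tail_space_zero: "(\<lambda>_. 0) \<in> tail_space n k"
  unfolding tail_space_def fcoeff_def by simp

lemma tail_space_add:
  "f \<in> tail_space n k \<Longrightarrow> g \<in> tail_space n k \<Longrightarrow> (\<lambda>x. f x + g x) \<in> tail_space n k"
  unfolding tail_space_def fcoeff_def by (simp add: distrib_right sum.distrib add_divide_distrib)

lemma tail_space_scale: "f \<in> tail_space n k \<Longrightarrow> (\<lambda>x. a * f x) \<in> tail_space n k"
  unfolding tail_space_def fcoeff_def by (simp add: mult.assoc sum_distrib_left[symmetric])

lemma tail_space_orthogonal:
  assumes g: "g \<in> tail_space n k" and h: "h \<in> walsh_polys n k"
  shows "cube_avg n (\<lambda>x. g x * h x) = 0"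
proof -
  obtain c where c: "\<forall>x\<in>cube n. h x = (\<Sum>S\<in>low_sets n k. c S * walsh S x)"
    using h unfolding walsh_polys_def by auto
  have "(\<Sum>x\<in>cube n. g x * h x) = (\<Sum>x\<in>cube n. \<Sum>S\<in>low_sets n k. c S * (g x * walsh S x))"
    using c by (simp add: sum_distrib_left algebra_simps)
  also have "\<dots> = (\<Sum>S\<in>low_sets n k. c S * (\<Sum>x\<in>cube n. g x * walsh S x))"
    by (subst sum.swap) (simp add: sum_distrib_left)
  also have "\<dots> = (\<Sum>S\<in>low_sets n k. c S * (2 ^ n * fcoeff n g S))"
    unfolding fcoeff_def by simp
  also have "\<dots> = 0" using g unfolding tail_space_def low_sets_def by auto
  finally show ?thesis by (simp add: cube_avg_def)
qed

section \<open>\<open>L\<^sub>r\<close> norms on the cube\<close>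

lemma sgn_mult_self_abs: "sgn a * a = \<bar>a::real\<bar>"
  by (simp add: abs_sgn mult.commute)

definition conjugate_exponents :: "ereal \<Rightarrow> ereal \<Rightarrow> bool" where
  "conjugate_exponents a b \<longleftrightarrow> (a = 1 \<and> b = \<infinity>) \<or> (a = \<infinity> \<and> b = 1)
     \<or> (\<exists>r>1. a = ereal r \<and> b = ereal (r / (r - 1)))"

lemma conjugate_exponents_conj_exp: "1 \<le> p \<Longrightarrow> conjugate_exponents (ereal p) (conj_exp p)"
  unfolding conjugate_exponents_def conj_exp_def by (auto simp: one_ereal_def)

lemma conjugate_exponents_sym: "conjugate_exponents a b \<Longrightarrow> conjugate_exponents b a"
  unfolding conjugate_exponents_def
proof (elim disjE conjE exE)
  fix r :: real assume r: "1 < r" "a = ereal r" "b = ereal (r / (r - 1))"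
  have "1 < r / (r - 1)" "r / (r - 1) / (r / (r - 1) - 1) = r"
    using r by (simp_all add: field_simps)
  then show "(b = 1 \<and> a = \<infinity>) \<or> (b = \<infinity> \<and> a = 1) \<or> (\<exists>s>1. b = ereal s \<and> a = ereal (s / (s - 1)))"
    using r by metis
qed auto

lemma lnorm_ereal: "lnorm n (ereal r) f = cube_avg n (\<lambda>x. \<bar>f x\<bar> powr r) powr (1 / r)"
  by (simp add: lnorm_def cube_avg_def)

lemma lnorm_1: "lnorm n 1 f = cube_avg n (\<lambda>x. \<bar>f x\<bar>)"
  by (simp add: lnorm_def cube_avg_def one_ereal_def sum_nonneg)

lemma lnorm_infinity: "lnorm n \<infinity> f = Max ((\<lambda>x. \<bar>f x\<bar>) ` cube n)"
  by (simp add: lnorm_def)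

lemma lnorm_nonneg: "0 \<le> lnorm n a f"
proof (cases a)
  case PInf
  have "\<bar>f (\<lambda>_. 1)\<bar> \<le> Max ((\<lambda>x. \<bar>f x\<bar>) ` cube n)"
    by (rule Max_ge) (auto intro: one_in_cube)
  then show ?thesis using PInf by (simp add: lnorm_def)
qed (auto simp: lnorm_def)

lemma lnorm_cong: "(\<And>x. x \<in> cube n \<Longrightarrow> f x = g x) \<Longrightarrow> lnorm n a f = lnorm n a g"
  by (cases a) (simp_all add: lnorm_def cong: sum.cong image_cong)

lemma lnorm_zero: "(\<And>x. x \<in> cube n \<Longrightarrow> f x = 0) \<Longrightarrow> lnorm n a f = 0"
  using lnorm_cong[of n f "\<lambda>_. 0" a] by (cases a) (simp_all add: lnorm_def)

lemma lnorm_eq_0_imp: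
  assumes "0 < r" "lnorm n (ereal r) f = 0" "x \<in> cube n"
  shows "f x = 0"
  using assms cube_avg_eq_0_iff_nonneg[of n "\<lambda>x. \<bar>f x\<bar> powr r"] by (simp add: lnorm_ereal)

lemma lnorm_const_1: "0 < r \<Longrightarrow> lnorm n (ereal r) (\<lambda>_. 1) = 1"
  by (simp add: lnorm_ereal cube_avg_const)

lemma lnorm_even: "0 < m \<Longrightarrow> even m \<Longrightarrow> lnorm n (ereal m) f = cube_avg n (\<lambda>x. f x ^ m) powr (1 / m)"
  by (simp add: lnorm_ereal powr_realpow' power_even_abs)

lemma holder_real:
  assumes r: "1 < r" and s: "s = r / (r - 1)"
  shows "cube_avg n (\<lambda>x. \<bar>u x * v x\<bar>) \<le> lnorm n (ereal r) u * lnorm n (ereal s) v"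
proof -
  have s1: "1 < s" using r s by (simp add: less_divide_eq)
  have rs: "1 / r + 1 / s = 1" using r s by (simp add: diff_divide_distrib)
  define A where "A = cube_avg n (\<lambda>x. \<bar>u x\<bar> powr r)"
  define B where "B = cube_avg n (\<lambda>x. \<bar>v x\<bar> powr s)"
  have ln: "lnorm n (ereal r) u = A powr (1 / r)" "lnorm n (ereal s) v = B powr (1 / s)"
    by (simp_all add: lnorm_ereal A_def B_def)
  have A0: "0 \<le> A" and B0: "0 \<le> B"
    unfolding A_def B_def by (auto intro: cube_avg_nonneg)
  show ?thesis
  proof (cases "A = 0 \<or> B = 0")
    case True
    then have "\<forall>x\<in>cube n. u x * v x = 0"
      using lnorm_eq_0_imp[of r n u] lnorm_eq_0_imp[of s n v] ln r s1 by auto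
    then show ?thesis using cube_avg_cong[of n "\<lambda>x. \<bar>u x * v x\<bar>" "\<lambda>_. 0"]
      by (simp add: cube_avg_const lnorm_nonneg)
  next
    case False
    then have Ap: "0 < A" and Bp: "0 < B" using A0 B0 by auto
    define \<alpha> \<beta> where "\<alpha> = A powr (1 / r)" and "\<beta> = B powr (1 / s)"
    have ap: "0 < \<alpha>" and bp: "0 < \<beta>" using Ap Bp by (simp_all add: \<alpha>_def \<beta>_def)
    have ar: "\<alpha> powr r = A" and bs: "\<beta> powr s = B"
      using A0 B0 r s1 by (simp_all add: \<alpha>_def \<beta>_def powr_powr)
    have "\<bar>u x * v x\<bar> / (\<alpha> * \<beta>) \<le> \<bar>u x\<bar> powr r / A / r + \<bar>v x\<bar> powr s / B / s" for x
    proof -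
      have "\<bar>u x * v x\<bar> / (\<alpha> * \<beta>) = (\<bar>u x\<bar> / \<alpha>) * (\<bar>v x\<bar> / \<beta>)" by (simp add: abs_mult)
      also have "\<dots> \<le> (\<bar>u x\<bar> / \<alpha>) powr r / r + (\<bar>v x\<bar> / \<beta>) powr s / s"
        by (rule Youngs_inequality) (use r s1 rs ap bp in auto)
      finally show ?thesis using ap bp by (simp add: powr_divide ar bs)
    qed
    then have "cube_avg n (\<lambda>x. \<bar>u x * v x\<bar> / (\<alpha> * \<beta>))
        \<le> cube_avg n (\<lambda>x. (1 / (A * r)) * \<bar>u x\<bar> powr r + (1 / (B * s)) * \<bar>v x\<bar> powr s)"
      by (intro cube_avg_mono) simp
    also have "\<dots> = (1 / (A * r)) * A + (1 / (B * s)) * B"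
      unfolding cube_avg_add cube_avg_scale A_def B_def ..
    also have "\<dots> = 1 / r + 1 / s"
      using Ap Bp by simp
    finally have "cube_avg n (\<lambda>x. \<bar>u x * v x\<bar>) / (\<alpha> * \<beta>) \<le> 1"
      using rs cube_avg_scale[of n "1 / (\<alpha> * \<beta>)" "\<lambda>x. \<bar>u x * v x\<bar>"] by simp
    then show ?thesis using ap bp ln by (simp add: \<alpha>_def \<beta>_def divide_le_eq)
  qed
qed

lemma holder_1_infinity: "cube_avg n (\<lambda>x. \<bar>u x * v x\<bar>) \<le> lnorm n 1 u * lnorm n \<infinity> v"
proof -
  have "\<bar>v x\<bar> \<le> lnorm n \<infinity> v" if "x \<in> cube n" for x
    unfolding lnorm_infinity by (rule Max_ge) (use that in auto)
  then have "cube_avg n (\<lambda>x. \<bar>u x * v x\<bar>) \<le> cube_avg n (\<lambda>x. lnorm n \<infinity> v * \<bar>u x\<bar>)"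
    by (intro cube_avg_mono) (metis abs_ge_zero abs_mult mult.commute mult_left_mono)
  then show ?thesis unfolding cube_avg_scale lnorm_1 by (simp add: mult.commute)
qed

lemma holder_abs:
  assumes "conjugate_exponents a b"
  shows "cube_avg n (\<lambda>x. \<bar>u x * v x\<bar>) \<le> lnorm n a u * lnorm n b v"
  using assms holder_real[of _ _ n u v] holder_1_infinity[of n u v] holder_1_infinity[of n v u]
  unfolding conjugate_exponents_def by (auto simp: mult.commute abs_mult)

lemma holder:
  assumes "conjugate_exponents a b"
  shows "cube_avg n (\<lambda>x. u x * v x) \<le> lnorm n a u * lnorm n b v"
proof -
  have "cube_avg n (\<lambda>x. u x * v x) \<le> cube_avg n (\<lambda>x. \<bar>u x * v x\<bar>)"
    by (rule cube_avg_mono) simp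
  also have "\<dots> \<le> lnorm n a u * lnorm n b v"
    by (rule holder_abs[OF assms])
  finally show ?thesis .
qed

text \<open>The witness is \<open>sgn u |u|\<^bsup>r-1\<^esup>\<close>, normalised.\<close>
lemma norming_function_real:
  assumes r: "1 < r" and s: "s = r / (r - 1)"
  shows "\<exists>w. lnorm n (ereal s) w \<le> 1 \<and> cube_avg n (\<lambda>x. w x * u x) = lnorm n (ereal r) u"
proof -
  have rs: "(r - 1) * s = r" using r s by (simp add: field_simps)
  define A where "A = cube_avg n (\<lambda>x. \<bar>u x\<bar> powr r)"
  define \<alpha> where "\<alpha> = A powr (1 / r)"
  have A0: "0 \<le> A" unfolding A_def by (rule cube_avg_nonneg) simp
  have ln: "lnorm n (ereal r) u = \<alpha>" by (simp add: lnorm_ereal \<alpha>_def A_def)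
  show ?thesis
  proof (cases "\<alpha> = 0")
    case True
    then show ?thesis using ln lnorm_zero[of n "\<lambda>_. 0"] by (intro exI[of _ "\<lambda>_. 0"]) (simp add: cube_avg_const)
  next
    case False
    then have Ap: "0 < A" and ap: "0 < \<alpha>" using A0 by (auto simp: \<alpha>_def)
    have ar: "\<alpha> powr r = A" unfolding \<alpha>_def using A0 r by (simp add: powr_powr)
    define w where "w x = sgn (u x) * \<bar>u x\<bar> powr (r - 1) / \<alpha> powr (r - 1)" for x
    have "w x * u x = (1 / \<alpha> powr (r - 1)) * \<bar>u x\<bar> powr r" for x
    proof -
      have "w x * u x = (sgn (u x) * u x) * \<bar>u x\<bar> powr (r - 1) / \<alpha> powr (r - 1)"
        unfolding w_def by (simp add: ac_simps)
      also have "\<dots> = (\<bar>u x\<bar> * \<bar>u x\<bar> powr (r - 1)) / \<alpha> powr (r - 1)"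
        by (simp only: sgn_mult_self_abs)
      finally show ?thesis using powr_mult_base[of "\<bar>u x\<bar>" "r - 1"] by simp
    qed
    then have "cube_avg n (\<lambda>x. w x * u x) = A / \<alpha> powr (r - 1)"
      by (simp add: cube_avg_divide A_def)
    also have "\<dots> = \<alpha>" using ap by (simp add: ar[symmetric] powr_diff)
    finally have 1: "cube_avg n (\<lambda>x. w x * u x) = lnorm n (ereal r) u" using ln by simp
    have "\<bar>w x\<bar> powr s = (1 / A) * \<bar>u x\<bar> powr r" for x
    proof -
      have "\<bar>w x\<bar> = \<bar>u x\<bar> powr (r - 1) / \<alpha> powr (r - 1)"
        unfolding w_def by (simp add: abs_mult sgn_if)
      then show ?thesis using ap by (simp add: powr_divide powr_powr rs ar)
    qed
    then have "cube_avg n (\<lambda>x. \<bar>w x\<bar> powr s) = 1"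
      using Ap by (simp add: cube_avg_divide flip: A_def)
    then show ?thesis using 1 by (intro exI[of _ w]) (simp add: lnorm_ereal)
  qed
qed

lemma norming_function_1:
  "\<exists>w. lnorm n \<infinity> w \<le> 1 \<and> cube_avg n (\<lambda>x. w x * u x) = lnorm n 1 u"
proof (intro exI conjI)
  show "lnorm n \<infinity> (\<lambda>x. sgn (u x)) \<le> 1"
    unfolding lnorm_infinity by (subst Max_le_iff) (auto simp: sgn_if)
  show "cube_avg n (\<lambda>x. sgn (u x) * u x) = lnorm n 1 u"
    by (simp add: lnorm_1 sgn_mult_self_abs)
qed

lemma norming_function_infinity:
  "\<exists>w. lnorm n 1 w \<le> 1 \<and> cube_avg n (\<lambda>x. w x * u x) = lnorm n \<infinity> u"
proof -
  have "lnorm n \<infinity> u \<in> (\<lambda>x. \<bar>u x\<bar>) ` cube n"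
    unfolding lnorm_infinity by (rule Max_in) auto
  then obtain x0 where x0: "x0 \<in> cube n" "\<bar>u x0\<bar> = lnorm n \<infinity> u"
    by auto
  define w where "w x = (if x = x0 then 2 ^ n * sgn (u x0) else 0)" for x
  have "(\<Sum>x\<in>cube n. \<bar>w x\<bar>) = (\<Sum>x\<in>cube n. if x = x0 then 2 ^ n * \<bar>sgn (u x0)\<bar> else 0)"
    by (rule sum.cong) (auto simp: w_def abs_mult)
  then have "lnorm n 1 w = \<bar>sgn (u x0)\<bar>"
    using x0(1) by (simp add: lnorm_1 cube_avg_def)
  moreover have "(\<Sum>x\<in>cube n. w x * u x) = (\<Sum>x\<in>cube n. if x = x0 then 2 ^ n * \<bar>u x0\<bar> else 0)"
    by (rule sum.cong) (auto simp: w_def sgn_mult_self_abs mult.assoc)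
  then have "cube_avg n (\<lambda>x. w x * u x) = \<bar>u x0\<bar>"
    using x0(1) by (simp add: cube_avg_def)
  ultimately show ?thesis using x0 by (intro exI[of _ w]) (simp add: sgn_if)
qed

lemma norming_function:
  assumes "conjugate_exponents a b"
  shows "\<exists>w. lnorm n b w \<le> 1 \<and> cube_avg n (\<lambda>x. w x * u x) = lnorm n a u"
  using assms norming_function_1 norming_function_infinity norming_function_real
  unfolding conjugate_exponents_def by auto

lemma lnorm_triangle:
  assumes "conjugate_exponents a b"
  shows "lnorm n a (\<lambda>x. u x + v x) \<le> lnorm n a u + lnorm n a v"
proof -
  obtain w where w: "lnorm n b w \<le> 1" "cube_avg n (\<lambda>x. w x * (u x + v x)) = lnorm n a (\<lambda>x. u x + v x)"
    using norming_function[OF assms, of n "\<lambda>x. u x + v x"] by blast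
  have "lnorm n a (\<lambda>x. u x + v x) = cube_avg n (\<lambda>x. u x * w x) + cube_avg n (\<lambda>x. v x * w x)"
    using w(2) by (simp add: cube_avg_add[symmetric] algebra_simps)
  also have "\<dots> \<le> lnorm n a u * lnorm n b w + lnorm n a v * lnorm n b w"
    by (intro add_mono holder[OF assms])
  also have "\<dots> \<le> lnorm n a u + lnorm n a v"
    using w(1) lnorm_nonneg[of n a u] lnorm_nonneg[of n a v]
    by (intro add_mono) (auto intro: mult_left_le)
  finally show ?thesis .
qed

lemma lnorm_scale:
  assumes "conjugate_exponents a b" "0 \<le> c"
  shows "lnorm n a (\<lambda>x. c * u x) = c * lnorm n a u"
proof (rule antisym)
  obtain w where w: "lnorm n b w \<le> 1" "cube_avg n (\<lambda>x. w x * (c * u x)) = lnorm n a (\<lambda>x. c * u x)"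
    using norming_function[OF assms(1), of n "\<lambda>x. c * u x"] by blast
  have "lnorm n a (\<lambda>x. c * u x) = c * cube_avg n (\<lambda>x. u x * w x)"
    using w(2) by (simp add: cube_avg_scale[symmetric] algebra_simps)
  also have "\<dots> \<le> c * (lnorm n a u * lnorm n b w)"
    by (intro mult_left_mono holder assms)
  also have "\<dots> \<le> c * lnorm n a u"
    using w(1) lnorm_nonneg[of n a u] assms(2) by (intro mult_left_mono) (auto intro: mult_left_le)
  finally show "lnorm n a (\<lambda>x. c * u x) \<le> c * lnorm n a u" .
next
  obtain w where w: "lnorm n b w \<le> 1" "cube_avg n (\<lambda>x. w x * u x) = lnorm n a u"
    using norming_function[OF assms(1), of n u] by blast
  have "c * lnorm n a u = c * cube_avg n (\<lambda>x. u x * w x)"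
    using w(2) by (simp add: mult.commute)
  also have "\<dots> = cube_avg n (\<lambda>x. (c * u x) * w x)"
    by (simp add: cube_avg_scale[symmetric] mult.assoc)
  also have "\<dots> \<le> lnorm n a (\<lambda>x. c * u x) * lnorm n b w"
    by (rule holder[OF assms(1)])
  also have "\<dots> \<le> lnorm n a (\<lambda>x. c * u x)"
    using w(1) lnorm_nonneg[of n a "\<lambda>x. c * u x"] by (auto intro: mult_left_le)
  finally show "c * lnorm n a u \<le> lnorm n a (\<lambda>x. c * u x)" .
qed

lemma lnorm_mono:
  assumes a: "1 \<le> a" and ab: "a \<le> b"
  shows "lnorm n (ereal a) u \<le> lnorm n (ereal b) u"
proof (cases "a = b")
  case False
  then have r: "1 < b / a" using a ab by (simp add: field_simps)
  have "cube_avg n (\<lambda>x. \<bar>\<bar>u x\<bar> powr a * 1\<bar>)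
      \<le> lnorm n (ereal (b / a)) (\<lambda>x. \<bar>u x\<bar> powr a) * lnorm n (ereal (b / a / (b / a - 1))) (\<lambda>_. 1)"
    by (rule holder_real[OF r refl])
  also have "lnorm n (ereal (b / a / (b / a - 1))) (\<lambda>_. 1) = 1"
    using r a ab by (intro lnorm_const_1 divide_pos_pos) auto
  finally have "cube_avg n (\<lambda>x. \<bar>u x\<bar> powr a) \<le> cube_avg n (\<lambda>x. \<bar>u x\<bar> powr b) powr (a / b)"
    using a ab by (simp add: lnorm_ereal powr_powr)
  then have "cube_avg n (\<lambda>x. \<bar>u x\<bar> powr a) powr (1 / a)
      \<le> (cube_avg n (\<lambda>x. \<bar>u x\<bar> powr b) powr (a / b)) powr (1 / a)"
    using a by (intro powr_mono2) (auto intro: cube_avg_nonneg)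
  then show ?thesis using a ab by (simp add: lnorm_ereal powr_powr)
qed simp

section \<open>Hahn--Banach for finitely many extension steps\<close>

definition fun_subspace :: "('a \<Rightarrow> real) set \<Rightarrow> bool" where
  "fun_subspace W \<longleftrightarrow> (\<lambda>_. 0) \<in> W \<and> (\<forall>u\<in>W. \<forall>v\<in>W. (\<lambda>x. u x + v x) \<in> W)
     \<and> (\<forall>u\<in>W. \<forall>c. (\<lambda>x. c * u x) \<in> W)"

definition linear_on :: "(('a \<Rightarrow> real) \<Rightarrow> real) \<Rightarrow> ('a \<Rightarrow> real) set \<Rightarrow> bool" where
  "linear_on \<phi> W \<longleftrightarrow> (\<forall>u\<in>W. \<forall>v\<in>W. \<phi> (\<lambda>x. u x + v x) = \<phi> u + \<phi> v)
     \<and> (\<forall>u\<in>W. \<forall>c. \<phi> (\<lambda>x. c * u x) = c * \<phi> u)"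

definition sublinear :: "(('a \<Rightarrow> real) \<Rightarrow> real) \<Rightarrow> bool" where
  "sublinear S \<longleftrightarrow> (\<forall>u v. S (\<lambda>x. u x + v x) \<le> S u + S v) \<and> (\<forall>u c. 0 \<le> c \<longrightarrow> S (\<lambda>x. c * u x) = c * S u)"

definition subspace_extend :: "('a \<Rightarrow> real) set \<Rightarrow> ('a \<Rightarrow> real) \<Rightarrow> ('a \<Rightarrow> real) set" where
  "subspace_extend W v = {u. \<exists>w\<in>W. \<exists>t. u = (\<lambda>x. w x + t * v x)}"

lemma fun_subspace_zero: "fun_subspace W \<Longrightarrow> (\<lambda>_. 0) \<in> W"
  unfolding fun_subspace_def by blast

lemma fun_subspace_add: "fun_subspace W \<Longrightarrow> u \<in> W \<Longrightarrow> v \<in> W \<Longrightarrow> (\<lambda>x. u x + v x) \<in> W"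
  unfolding fun_subspace_def by blast

lemma fun_subspace_scale: "fun_subspace W \<Longrightarrow> u \<in> W \<Longrightarrow> (\<lambda>x. c * u x) \<in> W"
  unfolding fun_subspace_def by blast

lemma fun_subspace_sum:
  assumes "fun_subspace W" "finite A" "\<And>i. i \<in> A \<Longrightarrow> F i \<in> W"
  shows "(\<lambda>x. \<Sum>i\<in>A. F i x) \<in> W"
  using assms(2,3)
proof (induction A rule: finite_induct)
  case empty
  then show ?case using fun_subspace_zero[OF assms(1)] by simp
next
  case (insert a A)
  then show ?case using fun_subspace_add[OF assms(1), of "F a" "\<lambda>x. \<Sum>i\<in>A. F i x"] by simp
qed

lemma linear_on_add: "linear_on \<phi> W \<Longrightarrow> u \<in> W \<Longrightarrow> v \<in> W \<Longrightarrow> \<phi> (\<lambda>x. u x + v x) = \<phi> u + \<phi> v"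
  unfolding linear_on_def by blast

lemma linear_on_scale: "linear_on \<phi> W \<Longrightarrow> u \<in> W \<Longrightarrow> \<phi> (\<lambda>x. c * u x) = c * \<phi> u"
  unfolding linear_on_def by blast

lemma linear_on_zero: "fun_subspace W \<Longrightarrow> linear_on \<phi> W \<Longrightarrow> \<phi> (\<lambda>_. 0) = 0"
  using linear_on_scale[of \<phi> W "\<lambda>_. 0" 0] fun_subspace_zero[of W] by simp

lemma linear_on_sum:
  assumes "fun_subspace W" "linear_on \<phi> W" "finite A" "\<And>i. i \<in> A \<Longrightarrow> F i \<in> W"
  shows "\<phi> (\<lambda>x. \<Sum>i\<in>A. F i x) = (\<Sum>i\<in>A. \<phi> (F i))"
  using assms(3,4)
proof (induction A rule: finite_induct)
  case empty
  then show ?case using linear_on_zero[OF assms(1,2)] by simp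
next
  case (insert a A)
  then have "\<phi> (\<lambda>x. F a x + (\<Sum>i\<in>A. F i x)) = \<phi> (F a) + \<phi> (\<lambda>x. \<Sum>i\<in>A. F i x)"
    using fun_subspace_sum[OF assms(1) insert(1)] by (intro linear_on_add[OF assms(2)]) auto
  then show ?case using insert by simp
qed

lemma fun_subspace_extend: "fun_subspace W \<Longrightarrow> fun_subspace (subspace_extend W v)"
  unfolding fun_subspace_def subspace_extend_def
proof (elim conjE, intro conjI ballI allI)
  assume W: "(\<lambda>_. 0) \<in> W" "\<forall>u\<in>W. \<forall>v\<in>W. (\<lambda>x. u x + v x) \<in> W" "\<forall>u\<in>W. \<forall>c. (\<lambda>x. c * u x) \<in> W"
  show "(\<lambda>_. 0) \<in> {u. \<exists>w\<in>W. \<exists>t. u = (\<lambda>x. w x + t * v x)}"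
    using W(1) by (auto intro!: bexI[of _ "\<lambda>_. 0"] exI[of _ 0])
  fix u1 u2 assume "u1 \<in> {u. \<exists>w\<in>W. \<exists>t. u = (\<lambda>x. w x + t * v x)}" "u2 \<in> {u. \<exists>w\<in>W. \<exists>t. u = (\<lambda>x. w x + t * v x)}"
  then obtain w1 t1 w2 t2 where "w1 \<in> W" "w2 \<in> W" "u1 = (\<lambda>x. w1 x + t1 * v x)" "u2 = (\<lambda>x. w2 x + t2 * v x)"
    by auto
  then show "(\<lambda>x. u1 x + u2 x) \<in> {u. \<exists>w\<in>W. \<exists>t. u = (\<lambda>x. w x + t * v x)}"
    using W(2) by (auto intro!: bexI[of _ "\<lambda>x. w1 x + w2 x"] exI[of _ "t1 + t2"] simp: algebra_simps)
next
  fix u c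
  assume W: "\<forall>u\<in>W. \<forall>c. (\<lambda>x. c * u x) \<in> W" and "u \<in> {u. \<exists>w\<in>W. \<exists>t. u = (\<lambda>x. w x + t * v x)}"
  then obtain w t where "w \<in> W" "u = (\<lambda>x. w x + t * v x)" by auto
  then show "(\<lambda>x. c * u x) \<in> {u. \<exists>w\<in>W. \<exists>t. u = (\<lambda>x. w x + t * v x)}"
    using W by (auto intro!: bexI[of _ "\<lambda>x. c * w x"] exI[of _ "c * t"] simp: algebra_simps)
qed

lemma subset_subspace_extend: "W \<subseteq> subspace_extend W v"
  unfolding subspace_extend_def by (auto intro!: exI[of _ 0])

lemma in_subspace_extend: "fun_subspace W \<Longrightarrow> v \<in> subspace_extend W v"
  unfolding subspace_extend_def by (auto intro!: bexI[of _ "\<lambda>_. 0"] exI[of _ 1] fun_subspace_zero)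

lemma subspace_extend_unique:
  assumes W: "fun_subspace W" and v: "v \<notin> W" and w: "w \<in> W" "w' \<in> W"
    and eq: "(\<lambda>x. w x + t * v x) = (\<lambda>x. w' x + t' * v x)"
  shows "t = t' \<and> w = w'"
proof -
  have eq': "w x + t * v x = w' x + t' * v x" for x using fun_cong[OF eq] by simp
  have "t = t'"
  proof (rule ccontr)
    assume "t \<noteq> t'"
    then have "v = (\<lambda>x. (1 / (t' - t)) * (w x + (-1) * w' x))"
      using eq' by (auto simp: field_simps)
    also have "\<dots> \<in> W" using W w by (intro fun_subspace_scale fun_subspace_add) auto
    finally show False using v by simp
  qed
  then show ?thesis using eq' by auto
qed

definition extend_functional ::
    "('a \<Rightarrow> real) set \<Rightarrow> ('a \<Rightarrow> real) \<Rightarrow> (('a \<Rightarrow> real) \<Rightarrow> real) \<Rightarrow> real \<Rightarrow> ('a \<Rightarrow> real) \<Rightarrow> real" where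
  "extend_functional W v \<phi> c u = (THE a. \<exists>w\<in>W. \<exists>t. u = (\<lambda>x. w x + t * v x) \<and> a = \<phi> w + t * c)"

lemma extend_functional_eq:
  assumes W: "fun_subspace W" and v: "v \<notin> W" and w: "w \<in> W"
  shows "extend_functional W v \<phi> c (\<lambda>x. w x + t * v x) = \<phi> w + t * c"
  unfolding extend_functional_def
proof (rule the_equality)
  fix a assume "\<exists>w'\<in>W. \<exists>t'. (\<lambda>x. w x + t * v x) = (\<lambda>x. w' x + t' * v x) \<and> a = \<phi> w' + t' * c"
  then obtain w' t' where "w' \<in> W" "(\<lambda>x. w x + t * v x) = (\<lambda>x. w' x + t' * v x)" "a = \<phi> w' + t' * c"
    by blast
  then show "a = \<phi> w + t * c" using subspace_extend_unique[OF W v w] by auto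
qed (use w in blast)

lemma linear_on_extend_functional:
  assumes W: "fun_subspace W" and v: "v \<notin> W" and \<phi>: "linear_on \<phi> W"
  shows "linear_on (extend_functional W v \<phi> c) (subspace_extend W v)"
  unfolding linear_on_def subspace_extend_def
proof (intro conjI ballI allI)
  note key = extend_functional_eq[OF W v]
  fix u1 u2 assume "u1 \<in> {u. \<exists>w\<in>W. \<exists>t. u = (\<lambda>x. w x + t * v x)}" "u2 \<in> {u. \<exists>w\<in>W. \<exists>t. u = (\<lambda>x. w x + t * v x)}"
  then obtain w1 t1 w2 t2 where w: "w1 \<in> W" "w2 \<in> W" "u1 = (\<lambda>x. w1 x + t1 * v x)" "u2 = (\<lambda>x. w2 x + t2 * v x)"
    by auto
  have "(\<lambda>x. u1 x + u2 x) = (\<lambda>x. (w1 x + w2 x) + (t1 + t2) * v x)"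
    using w by (auto simp: algebra_simps)
  then have "extend_functional W v \<phi> c (\<lambda>x. u1 x + u2 x) = \<phi> (\<lambda>x. w1 x + w2 x) + (t1 + t2) * c"
    using key[OF fun_subspace_add[OF W w(1,2)]] by simp
  then show "extend_functional W v \<phi> c (\<lambda>x. u1 x + u2 x)
      = extend_functional W v \<phi> c u1 + extend_functional W v \<phi> c u2"
    using w key linear_on_add[OF \<phi> w(1,2)] by (simp add: algebra_simps)
next
  note key = extend_functional_eq[OF W v]
  fix u a assume "u \<in> {u. \<exists>w\<in>W. \<exists>t. u = (\<lambda>x. w x + t * v x)}"
  then obtain w t where w: "w \<in> W" "u = (\<lambda>x. w x + t * v x)" by auto
  have "(\<lambda>x. a * u x) = (\<lambda>x. a * w x + (a * t) * v x)"
    using w by (auto simp: algebra_simps)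
  then have "extend_functional W v \<phi> c (\<lambda>x. a * u x) = \<phi> (\<lambda>x. a * w x) + (a * t) * c"
    using key[OF fun_subspace_scale[OF W w(1)]] by simp
  then show "extend_functional W v \<phi> c (\<lambda>x. a * u x) = a * extend_functional W v \<phi> c u"
    using w key linear_on_scale[OF \<phi> w(1)] by (simp add: algebra_simps)
qed

lemma sublinear_extension_bound:
  assumes S: "sublinear S" and \<phi>: "linear_on \<phi> W" and W: "fun_subspace W" and w: "w \<in> W"
    and dom: "\<phi> w \<le> S w"
    and lower: "\<And>w. w \<in> W \<Longrightarrow> \<phi> w - S (\<lambda>x. w x - v x) \<le> c"
    and upper: "\<And>w. w \<in> W \<Longrightarrow> c \<le> S (\<lambda>x. w x + v x) - \<phi> w"
  shows "\<phi> w + t * c \<le> S (\<lambda>x. w x + t * v x)"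
proof -
  have S_scale: "S (\<lambda>x. a * u x) = a * S u" if "0 \<le> a" for a u
    using S that unfolding sublinear_def by blast
  have \<phi>_scale: "\<phi> w = a * \<phi> (\<lambda>x. (1 / a) * w x)" if "0 < a" for a
    using linear_on_scale[OF \<phi> w, of "1 / a"] that by simp
  have shift: "a * S (\<lambda>x. (1 / a) * w x + b * v x) = S (\<lambda>x. w x + (a * b) * v x)" if "0 < a" for a b
  proof -
    have "(\<lambda>x. a * ((1 / a) * w x + b * v x)) = (\<lambda>x. w x + (a * b) * v x)"
      using that by (simp add: algebra_simps)
    then show ?thesis using S_scale[of a "\<lambda>x. (1 / a) * w x + b * v x"] that by simp
  qed
  consider "t = 0" | "0 < t" | "0 < - t" by linarith
  then show ?thesis
  proof cases
    case 1
    then show ?thesis using dom by simp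
  next
    case 2
    have "c \<le> S (\<lambda>x. (1 / t) * w x + 1 * v x) - \<phi> (\<lambda>x. (1 / t) * w x)"
      using upper[OF fun_subspace_scale[OF W w, of "1 / t"]] by simp
    then have "t * c \<le> t * (S (\<lambda>x. (1 / t) * w x + 1 * v x) - \<phi> (\<lambda>x. (1 / t) * w x))"
      by (rule mult_left_mono) (use 2 in simp)
    then show ?thesis
      using shift[OF 2, of 1] \<phi>_scale[OF 2] by (simp add: right_diff_distrib)
  next
    case 3
    have "\<phi> (\<lambda>x. (1 / - t) * w x) - S (\<lambda>x. (1 / - t) * w x + (-1) * v x) \<le> c"
      using lower[OF fun_subspace_scale[OF W w, of "1 / - t"]] by simp
    then have "- t * (\<phi> (\<lambda>x. (1 / - t) * w x) - S (\<lambda>x. (1 / - t) * w x + (-1) * v x)) \<le> - t * c"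
      by (rule mult_left_mono) (use 3 in simp)
    then show ?thesis
      using shift[OF 3, of "-1"] \<phi>_scale[OF 3] by (simp add: right_diff_distrib)
  qed
qed

lemma hahn_banach_step:
  assumes W: "fun_subspace W" and \<phi>: "linear_on \<phi> W" and S: "sublinear S"
    and dom: "\<And>w. w \<in> W \<Longrightarrow> \<phi> w \<le> S w" and v: "v \<notin> W"
    and lower: "\<And>w. w \<in> W \<Longrightarrow> \<phi> w - S (\<lambda>x. w x - v x) \<le> c"
    and upper: "\<And>w. w \<in> W \<Longrightarrow> c \<le> S (\<lambda>x. w x + v x) - \<phi> w"
  obtains \<phi>' where "linear_on \<phi>' (subspace_extend W v)" "\<And>w. w \<in> W \<Longrightarrow> \<phi>' w = \<phi> w" "\<phi>' v = c"
    "\<And>u. u \<in> subspace_extend W v \<Longrightarrow> \<phi>' u \<le> S u"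
proof
  note key = extend_functional_eq[OF W v, of _ \<phi> c]
  show "linear_on (extend_functional W v \<phi> c) (subspace_extend W v)"
    by (rule linear_on_extend_functional[OF W v \<phi>])
  show "extend_functional W v \<phi> c w = \<phi> w" if "w \<in> W" for w
    using key[OF that, of 0] by simp
  show "extend_functional W v \<phi> c v = c"
    using key[OF fun_subspace_zero[OF W], of 1] linear_on_zero[OF W \<phi>] by simp
  show "extend_functional W v \<phi> c u \<le> S u" if u: "u \<in> subspace_extend W v" for u
  proof -
    obtain w t where "w \<in> W" "u = (\<lambda>x. w x + t * v x)"
      using u unfolding subspace_extend_def by blast
    then show ?thesis
      using key sublinear_extension_bound[OF S \<phi> W _ dom lower upper] by simp
  qed
qed

lemma hahn_banach_extend:
  assumes W: "fun_subspace W" and \<phi>: "linear_on \<phi> W" and S: "sublinear S"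
    and dom: "\<And>w. w \<in> W \<Longrightarrow> \<phi> w \<le> S w"
  obtains W' \<phi>' where "fun_subspace W'" "W \<subseteq> W'" "v \<in> W'" "linear_on \<phi>' W'"
    "\<And>w. w \<in> W \<Longrightarrow> \<phi>' w = \<phi> w" "\<And>u. u \<in> W' \<Longrightarrow> \<phi>' u \<le> S u"
proof (cases "v \<in> W")
  case False
  have sub: "S (\<lambda>x. u x + w x) \<le> S u + S w" for u w
    using S unfolding sublinear_def by blast
  have gap: "\<phi> w1 - S (\<lambda>x. w1 x - v x) \<le> S (\<lambda>x. w2 x + v x) - \<phi> w2" if "w1 \<in> W" "w2 \<in> W" for w1 w2
  proof -
    have "\<phi> w1 + \<phi> w2 \<le> S (\<lambda>x. w1 x + w2 x)"
      using dom[OF fun_subspace_add[OF W that]] linear_on_add[OF \<phi> that] by simp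
    also have "\<dots> \<le> S (\<lambda>x. w1 x - v x) + S (\<lambda>x. w2 x + v x)"
      using sub[of "\<lambda>x. w1 x - v x" "\<lambda>x. w2 x + v x"] by simp
    finally show ?thesis by simp
  qed
  define c where "c = (SUP w\<in>W. \<phi> w - S (\<lambda>x. w x - v x))"
  have bdd: "bdd_above ((\<lambda>w. \<phi> w - S (\<lambda>x. w x - v x)) ` W)"
    using gap[OF _ fun_subspace_zero[OF W]] by (intro bdd_aboveI2) blast
  have lower: "\<phi> w - S (\<lambda>x. w x - v x) \<le> c" if "w \<in> W" for w
    unfolding c_def using bdd that by (rule cSUP_upper2) simp
  have upper: "c \<le> S (\<lambda>x. w x + v x) - \<phi> w" if "w \<in> W" for w
    unfolding c_def using gap that fun_subspace_zero[OF W] by (intro cSUP_least) auto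
  obtain \<phi>' where ext: "linear_on \<phi>' (subspace_extend W v)" "\<And>w. w \<in> W \<Longrightarrow> \<phi>' w = \<phi> w"
    "\<phi>' v = c" "\<And>u. u \<in> subspace_extend W v \<Longrightarrow> \<phi>' u \<le> S u"
    using hahn_banach_step[OF W \<phi> S dom False lower upper] by blast
  show ?thesis
    by (rule that[OF fun_subspace_extend[OF W] subset_subspace_extend in_subspace_extend[OF W]
          ext(1,2,4)])
qed (rule that[OF W order_refl _ \<phi> refl dom])

lemma hahn_banach_finite:
  assumes B: "finite B" and W: "fun_subspace W" and \<phi>: "linear_on \<phi> W" and S: "sublinear S"
    and dom: "\<And>w. w \<in> W \<Longrightarrow> \<phi> w \<le> S w"
  obtains W' \<phi>' where "fun_subspace W'" "W \<subseteq> W'" "B \<subseteq> W'" "linear_on \<phi>' W'"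
    "\<And>w. w \<in> W \<Longrightarrow> \<phi>' w = \<phi> w" "\<And>u. u \<in> W' \<Longrightarrow> \<phi>' u \<le> S u"
  using B that
proof (induction B arbitrary: thesis rule: finite_induct)
  case empty
  then show ?case using W \<phi> dom by auto
next
  case (insert b B)
  obtain W1 \<phi>1 where 1: "fun_subspace W1" "W \<subseteq> W1" "B \<subseteq> W1" "linear_on \<phi>1 W1"
    "\<And>w. w \<in> W \<Longrightarrow> \<phi>1 w = \<phi> w" "\<And>u. u \<in> W1 \<Longrightarrow> \<phi>1 u \<le> S u"
    using insert.IH by blast
  obtain W2 \<phi>2 where 2: "fun_subspace W2" "W1 \<subseteq> W2" "b \<in> W2" "linear_on \<phi>2 W2"
    "\<And>w. w \<in> W1 \<Longrightarrow> \<phi>2 w = \<phi>1 w" "\<And>u. u \<in> W2 \<Longrightarrow> \<phi>2 u \<le> S u"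
    using hahn_banach_extend[OF 1(1,4) S 1(6)] by blast
  show ?case
  proof (rule insert.prems[OF 2(1) _ _ 2(4) _ 2(6)])
    show "W \<subseteq> W2" "insert b B \<subseteq> W2" using 1(2,3) 2(2,3) by auto
    show "\<phi>2 w = \<phi> w" if "w \<in> W" for w using that 1(2,5) 2(5) by auto
  qed
qed

lemma sum_indicator_interpolant:
  "finite X \<Longrightarrow> x \<in> X \<Longrightarrow> (\<Sum>y\<in>X. u y * indicator {y} x) = (u x :: real)"
  by (simp add: indicator_def if_distrib cong: if_cong)

lemma fun_subspace_interpolant:
  assumes "fun_subspace W" "finite X" "\<And>y. y \<in> X \<Longrightarrow> indicator {y} \<in> W"
  shows "(\<lambda>x. \<Sum>y\<in>X. u y * indicator {y} x) \<in> W"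
  using assms by (intro fun_subspace_sum fun_subspace_scale) auto

lemma linear_on_finite_representation:
  assumes W: "fun_subspace W" and \<psi>: "linear_on \<psi> W" and X: "finite X"
    and ind: "\<And>y. y \<in> X \<Longrightarrow> indicator {y} \<in> W"
    and null: "\<And>z. z \<in> W \<Longrightarrow> (\<And>x. x \<in> X \<Longrightarrow> z x = 0) \<Longrightarrow> \<psi> z = 0"
    and u: "u \<in> W"
  shows "\<psi> u = (\<Sum>y\<in>X. u y * \<psi> (indicator {y}))"
proof -
  define U where "U = (\<lambda>x. \<Sum>y\<in>X. u y * indicator {y} x)"
  have U: "U \<in> W" unfolding U_def by (rule fun_subspace_interpolant[OF W X ind])
  have "\<psi> U = (\<Sum>y\<in>X. \<psi> (\<lambda>x. u y * indicator {y} x))"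
    unfolding U_def using ind by (intro linear_on_sum[OF W \<psi> X] fun_subspace_scale[OF W])
  also have "\<dots> = (\<Sum>y\<in>X. u y * \<psi> (indicator {y}))"
    by (rule sum.cong[OF refl], rule linear_on_scale[OF \<psi> ind])
  finally have "\<psi> U = (\<Sum>y\<in>X. u y * \<psi> (indicator {y}))" .
  moreover have "\<psi> (\<lambda>x. u x + (-1) * U x) = 0"
  proof (rule null)
    show "(\<lambda>x. u x + (-1) * U x) \<in> W" using u U by (intro fun_subspace_add[OF W] fun_subspace_scale[OF W])
    show "u x + (-1) * U x = 0" if "x \<in> X" for x
      using sum_indicator_interpolant[OF X that] by (simp add: U_def)
  qed
  moreover have "\<psi> (\<lambda>x. u x + (-1) * U x) = \<psi> u - \<psi> U"
    using linear_on_add[OF \<psi> u fun_subspace_scale[OF W U, of "-1"]] linear_on_scale[OF \<psi> U, of "-1"]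
    by simp
  ultimately show ?thesis by simp
qed

section \<open>Bonami's lemma and hypercontractivity of low-degree functions\<close>

lemma bonami_step_inequality:
  fixes a b A B M K :: real
  assumes "0 \<le> a" "0 \<le> b" "0 \<le> B" "0 \<le> K"
    and "A \<le> 9 * K * a\<^sup>2" "B \<le> K * b\<^sup>2" "M\<^sup>2 \<le> A * B"
  shows "A + 6 * M + B \<le> 9 * K * (a + b)\<^sup>2"
proof -
  have "(6 * M)\<^sup>2 \<le> 36 * (A * B)" using assms(7) by simp
  also have "\<dots> \<le> 36 * ((9 * K * a\<^sup>2) * (K * b\<^sup>2))"
    using assms by (intro mult_left_mono mult_mono) auto
  also have "\<dots> = (18 * K * a * b)\<^sup>2" by algebra
  finally have "6 * M \<le> 18 * K * a * b"
    by (rule power2_le_imp_le) (use assms in simp)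
  then have "A + 6 * M + B \<le> 9 * K * a\<^sup>2 + 18 * K * a * b + K * b\<^sup>2"
    using assms(5,6) by linarith
  also have "\<dots> = 9 * K * (a + b)\<^sup>2 - 8 * K * b\<^sup>2" by algebra
  also have "\<dots> \<le> 9 * K * (a + b)\<^sup>2" using assms(4) by simp
  finally show ?thesis .
qed

text \<open>Bonami's lemma, by induction on the dimension: fixing the last coordinate writes
  \<open>f = g + x\<^sub>n h\<close> with \<open>deg h < k\<close>, and the cross term \<open>6 E[g\<^sup>2 h\<^sup>2]\<close> is controlled by
  Cauchy--Schwarz and the induction hypothesis.\<close>
lemma bonami:
  "f \<in> walsh_polys n k \<Longrightarrow> cube_avg n (\<lambda>x. f x ^ 4) \<le> 9 ^ k * (cube_avg n (\<lambda>x. f x ^ 2))\<^sup>2"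
proof (induction n arbitrary: k f)
  case 0
  have "1 * ((f (\<lambda>_. 1))\<^sup>2)\<^sup>2 \<le> 9 ^ k * ((f (\<lambda>_. 1))\<^sup>2)\<^sup>2"
    by (rule mult_right_mono) auto
  then show ?case by (simp add: cube_avg_0 flip: power_mult)
next
  case (Suc n)
  obtain g h where g: "g \<in> walsh_polys n k" and h: "h \<in> walsh_polys n (k - 1)"
    and h0: "k = 0 \<Longrightarrow> h = (\<lambda>_. 0)"
    and f: "\<And>x s. x \<in> cube n \<Longrightarrow> s \<in> {-1, 1} \<Longrightarrow> f (x(n := s)) = g x + s * h x"
    using walsh_polys_Suc_split[OF Suc.prems] by metis
  define a b where "a = cube_avg n (\<lambda>x. g x ^ 2)" and "b = cube_avg n (\<lambda>x. h x ^ 2)"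
  define A B where "A = cube_avg n (\<lambda>x. g x ^ 4)" and "B = cube_avg n (\<lambda>x. h x ^ 4)"
  define M where "M = cube_avg n (\<lambda>x. g x ^ 2 * h x ^ 2)"
  have a0: "0 \<le> a" and b0: "0 \<le> b" and B0: "0 \<le> B"
    unfolding a_def b_def B_def by (auto intro!: cube_avg_nonneg)
  have E4: "cube_avg (Suc n) (\<lambda>x. f x ^ 4) = A + 6 * M + B"
  proof -
    have expand: "((u + v) ^ 4 + (u - v) ^ 4) / 2 = u ^ 4 + 6 * (u ^ 2 * v ^ 2) + v ^ 4" for u v :: real
      by algebra
    show ?thesis
      by (simp only: cube_avg_Suc_split[OF f, of "\<lambda>y. y ^ 4"] expand cube_avg_add cube_avg_scale
          A_def B_def M_def)
  qed
  have E2: "cube_avg (Suc n) (\<lambda>x. f x ^ 2) = a + b"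
  proof -
    have expand: "((u + v) ^ 2 + (u - v) ^ 2) / 2 = u ^ 2 + v ^ 2" for u v :: real
      by algebra
    show ?thesis
      by (simp only: cube_avg_Suc_split[OF f, of "\<lambda>y. y ^ 2"] expand cube_avg_add a_def b_def)
  qed
  have IH_g: "A \<le> 9 ^ k * a\<^sup>2" unfolding A_def a_def by (rule Suc.IH[OF g])
  have IH_h: "B \<le> 9 ^ (k - 1) * b\<^sup>2" unfolding B_def b_def by (rule Suc.IH[OF h])
  have CS: "M\<^sup>2 \<le> A * B"
    using cube_avg_Cauchy_Schwarz[of n "\<lambda>x. g x ^ 2" "\<lambda>x. h x ^ 2"]
    unfolding M_def A_def B_def by (simp flip: power_mult)
  show ?case
  proof (cases "k = 0")
    case True
    then have "B = 0" "M = 0" "b = 0"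
      using h0 unfolding B_def M_def b_def by (simp_all add: cube_avg_const)
    then show ?thesis unfolding E4 E2 using IH_g by simp
  next
    case False
    then have nine: "(9::real) ^ k = 9 * 9 ^ (k - 1)" by (cases k) simp_all
    show ?thesis
      unfolding E4 E2 nine mult.assoc[symmetric]
      by (rule bonami_step_inequality[OF a0 b0 B0 _ IH_g[unfolded nine mult.assoc[symmetric]] IH_h CS]) simp
  qed
qed

text \<open>Induction on \<open>j\<close>: apply the induction hypothesis to \<open>f\<^sup>2\<close>, of degree \<open>2k\<close>, and then Bonami's lemma.\<close>
lemma walsh_polys_moment_bound:
  "\<exists>K\<ge>0. \<forall>n f. f \<in> walsh_polys n k \<longrightarrow>
     cube_avg n (\<lambda>x. f x ^ (2 * 2 ^ j)) \<le> K * (cube_avg n (\<lambda>x. f x ^ 2)) ^ (2 ^ j)"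
proof (induction j arbitrary: k)
  case 0
  show ?case by (intro exI[of _ 1]) simp
next
  case (Suc j)
  obtain K where K0: "0 \<le> K" and K: "\<And>n f. f \<in> walsh_polys n (2 * k) \<Longrightarrow>
      cube_avg n (\<lambda>x. f x ^ (2 * 2 ^ j)) \<le> K * (cube_avg n (\<lambda>x. f x ^ 2)) ^ (2 ^ j)"
    using Suc.IH[of "2 * k"] by blast
  have "cube_avg n (\<lambda>x. f x ^ (2 * 2 ^ Suc j)) \<le> (K * (9 ^ k) ^ (2 ^ j)) * (cube_avg n (\<lambda>x. f x ^ 2)) ^ (2 ^ Suc j)"
    if f: "f \<in> walsh_polys n k" for n f
  proof -
    have "(\<lambda>x. f x * f x) \<in> walsh_polys n (2 * k)"
      using walsh_polys_mult[OF f f] by (simp add: mult_2)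
    then have f2: "(\<lambda>x. f x ^ 2) \<in> walsh_polys n (2 * k)"
      by (simp add: power2_eq_square)
    have "cube_avg n (\<lambda>x. f x ^ (2 * 2 ^ Suc j)) = cube_avg n (\<lambda>x. (f x ^ 2) ^ (2 * 2 ^ j))"
      by (simp add: power_mult[symmetric] mult.commute mult.left_commute)
    also have "\<dots> \<le> K * (cube_avg n (\<lambda>x. f x ^ 4)) ^ (2 ^ j)"
      using K[OF f2] by (simp flip: power_mult)
    also have "\<dots> \<le> K * (9 ^ k * (cube_avg n (\<lambda>x. f x ^ 2))\<^sup>2) ^ (2 ^ j)"
      by (intro mult_left_mono power_mono bonami[OF f] cube_avg_nonneg K0) simp
    also have "\<dots> = (K * (9 ^ k) ^ (2 ^ j)) * (cube_avg n (\<lambda>x. f x ^ 2)) ^ (2 ^ Suc j)"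
      by (simp add: power_mult_distrib power_mult[symmetric] mult.commute)
    finally show ?thesis .
  qed
  then show ?case using K0 by (intro exI[of _ "K * (9 ^ k) ^ (2 ^ j)"]) auto
qed

text \<open>From \<open>(E f\<^sup>2)\<^sup>2 \<le> E|f| E|f|\<^sup>3\<close>, \<open>(E|f|\<^sup>3)\<^sup>2 \<le> E f\<^sup>2 E f\<^sup>4\<close> (Cauchy--Schwarz) and Bonami's lemma.\<close>
lemma walsh_polys_L2_le_L1:
  assumes f: "f \<in> walsh_polys n k"
  shows "cube_avg n (\<lambda>x. f x ^ 2) \<le> 9 ^ k * (cube_avg n (\<lambda>x. \<bar>f x\<bar>))\<^sup>2"
proof -
  define X Y Z Q where "X = cube_avg n (\<lambda>x. f x ^ 2)" and "Y = cube_avg n (\<lambda>x. \<bar>f x\<bar>)"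
    and "Z = cube_avg n (\<lambda>x. \<bar>f x\<bar> ^ 3)" and "Q = cube_avg n (\<lambda>x. f x ^ 4)"
  have X0: "0 \<le> X" unfolding X_def by (rule cube_avg_nonneg) simp
  have CS1: "X\<^sup>2 \<le> Y * Z"
  proof -
    have "sqrt \<bar>a\<bar> * (sqrt \<bar>a\<bar> * \<bar>a\<bar>) = a\<^sup>2" for a :: real
    proof -
      have "sqrt \<bar>a\<bar> * sqrt \<bar>a\<bar> = \<bar>a\<bar>" by simp
      then show ?thesis by (metis mult.assoc power2_eq_square abs_mult_self_eq)
    qed
    moreover have "(sqrt \<bar>a\<bar> * \<bar>a\<bar>)\<^sup>2 = \<bar>a\<bar> ^ 3" for a :: real
    proof -
      have "(sqrt \<bar>a\<bar> * \<bar>a\<bar>)\<^sup>2 = (sqrt \<bar>a\<bar>)\<^sup>2 * \<bar>a\<bar>\<^sup>2"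
        by (rule power_mult_distrib)
      also have "\<dots> = \<bar>a\<bar> ^ 3"
        by (simp add: power2_eq_square power3_eq_cube)
      finally show ?thesis .
    qed
    ultimately show ?thesis
      using cube_avg_Cauchy_Schwarz[of n "\<lambda>x. sqrt \<bar>f x\<bar>" "\<lambda>x. sqrt \<bar>f x\<bar> * \<bar>f x\<bar>"]
      unfolding X_def Y_def Z_def by simp
  qed
  have CS2: "Z\<^sup>2 \<le> X * Q"
  proof -
    have "\<bar>a\<bar> * a\<^sup>2 = \<bar>a\<bar> ^ 3" for a :: real
      by (simp add: power2_eq_square power3_eq_cube abs_mult_self_eq)
    then show ?thesis
      using cube_avg_Cauchy_Schwarz[of n "\<lambda>x. \<bar>f x\<bar>" "\<lambda>x. (f x)\<^sup>2"]
      unfolding X_def Z_def Q_def by (simp flip: power_mult)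
  qed
  have B: "Q \<le> 9 ^ k * X\<^sup>2" unfolding Q_def X_def by (rule bonami[OF f])
  have "(X\<^sup>2)\<^sup>2 \<le> (Y * Z)\<^sup>2" by (rule power_mono[OF CS1]) (use X0 in simp)
  also have "\<dots> = Y\<^sup>2 * Z\<^sup>2" by (simp add: power_mult_distrib)
  also have "\<dots> \<le> Y\<^sup>2 * (X * Q)" by (rule mult_left_mono[OF CS2]) simp
  also have "\<dots> \<le> Y\<^sup>2 * (X * (9 ^ k * X\<^sup>2))" using B X0 by (intro mult_left_mono) simp_all
  finally have "X ^ 3 * X \<le> X ^ 3 * (9 ^ k * Y\<^sup>2)"
    by (simp add: power2_eq_square power3_eq_cube ac_simps)
  then show ?thesis
    using X0 by (cases "X = 0") (simp_all add: X_def Y_def)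
qed

lemma walsh_polys_moment_le_L1:
  "\<exists>K\<ge>0. \<forall>n f. f \<in> walsh_polys n k \<longrightarrow>
     cube_avg n (\<lambda>x. f x ^ (2 * 2 ^ j)) \<le> K * (3 ^ k * cube_avg n (\<lambda>x. \<bar>f x\<bar>)) ^ (2 * 2 ^ j)"
proof -
  obtain K where K0: "0 \<le> K" and K: "\<And>n f. f \<in> walsh_polys n k \<Longrightarrow>
      cube_avg n (\<lambda>x. f x ^ (2 * 2 ^ j)) \<le> K * (cube_avg n (\<lambda>x. f x ^ 2)) ^ (2 ^ j)"
    using walsh_polys_moment_bound[of k j] by blast
  have "cube_avg n (\<lambda>x. f x ^ (2 * 2 ^ j)) \<le> K * (3 ^ k * cube_avg n (\<lambda>x. \<bar>f x\<bar>)) ^ (2 * 2 ^ j)"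
    if f: "f \<in> walsh_polys n k" for n f
  proof -
    have nine: "(9::real) ^ k = (3 ^ k)\<^sup>2" by (simp add: power2_eq_square flip: power_mult_distrib)
    have "cube_avg n (\<lambda>x. f x ^ (2 * 2 ^ j)) \<le> K * (cube_avg n (\<lambda>x. f x ^ 2)) ^ (2 ^ j)"
      by (rule K[OF f])
    also have "\<dots> \<le> K * (9 ^ k * (cube_avg n (\<lambda>x. \<bar>f x\<bar>))\<^sup>2) ^ (2 ^ j)"
      by (intro mult_left_mono power_mono K0 cube_avg_nonneg walsh_polys_L2_le_L1[OF f]) simp
    also have "\<dots> = K * (3 ^ k * cube_avg n (\<lambda>x. \<bar>f x\<bar>)) ^ (2 * 2 ^ j)"
      unfolding nine power_mult by (simp add: power_mult_distrib)
    finally show ?thesis .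
  qed
  then show ?thesis using K0 by blast
qed

lemma hypercontractive_constant_exists:
  assumes p: "1 \<le> p" and pq: "p \<le> q"
  shows "\<exists>C. \<forall>n f. deg_le n k f \<longrightarrow> lnorm n (ereal q) f \<le> C * lnorm n (ereal p) f"
proof -
  define j where "j = nat \<lceil>q\<rceil>"
  define m :: nat where "m = 2 * 2 ^ j"
  have "q \<le> real j" unfolding j_def by linarith
  also have "j \<le> m" unfolding m_def using less_exp[of j] by linarith
  finally have qm: "q \<le> real m" by simp
  have m0: "0 < m" and me: "even m" unfolding m_def by simp_all
  obtain K where K0: "0 \<le> K" and K: "\<And>n f. f \<in> walsh_polys n k \<Longrightarrow>
      cube_avg n (\<lambda>x. f x ^ m) \<le> K * (3 ^ k * cube_avg n (\<lambda>x. \<bar>f x\<bar>)) ^ m"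
    using walsh_polys_moment_le_L1[of k j] unfolding m_def by blast
  have "lnorm n (ereal q) f \<le> (K powr (1 / m) * 3 ^ k) * lnorm n (ereal p) f" if "deg_le n k f" for n f
  proof -
    define Y where "Y = cube_avg n (\<lambda>x. \<bar>f x\<bar>)"
    have Y0: "0 \<le> Y" unfolding Y_def by (rule cube_avg_nonneg) simp
    have "lnorm n (ereal q) f \<le> lnorm n (ereal m) f"
      by (rule lnorm_mono[OF order_trans[OF p pq] qm])
    also have "\<dots> \<le> (K * (3 ^ k * Y) ^ m) powr (1 / m)"
      unfolding lnorm_even[OF m0 me] Y_def using K[OF deg_le_imp_walsh_polys[OF that]] me
      by (intro powr_mono2) (auto intro: cube_avg_nonneg simp: zero_le_even_power)
    also have "\<dots> = K powr (1 / m) * (3 ^ k * Y)"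
      using K0 Y0 m0 by (simp add: powr_mult powr_realpow'[symmetric] powr_powr)
    also have "\<dots> \<le> K powr (1 / m) * (3 ^ k * lnorm n (ereal p) f)"
      unfolding Y_def lnorm_1[symmetric] one_ereal_def
      by (intro mult_left_mono lnorm_mono[OF order_refl p]) simp_all
    finally show ?thesis by (simp only: mult.assoc)
  qed
  then show ?thesis by blast
qed

section \<open>Duality for the distance to the tail space\<close>

lemma fun_subspace_tail_space: "fun_subspace (tail_space n k)"
  unfolding fun_subspace_def using tail_space_zero tail_space_add tail_space_scale by blast

lemma sublinear_lnorm: "conjugate_exponents a b \<Longrightarrow> sublinear (lnorm n a)"
  unfolding sublinear_def using lnorm_triangle lnorm_scale by blast

lemma tail_dist_nonneg: "0 \<le> tail_dist n k a f"
  unfolding tail_dist_def using tail_space_zero by (intro cINF_greatest) (auto simp: lnorm_nonneg)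

lemma tail_dist_le: "g \<in> tail_space n k \<Longrightarrow> tail_dist n k a f \<le> lnorm n a (\<lambda>x. f x - g x)"
  unfolding tail_dist_def by (rule cINF_lower) (auto intro: bdd_belowI2[where m=0] simp: lnorm_nonneg)

lemma tail_dist_greatest:
  "(\<And>g. g \<in> tail_space n k \<Longrightarrow> C \<le> lnorm n a (\<lambda>x. f x - g x)) \<Longrightarrow> C \<le> tail_dist n k a f"
  unfolding tail_dist_def using tail_space_zero by (intro cINF_greatest) auto

text \<open>Weak duality: \<open>h\<close> is orthogonal to the tail space.\<close>
lemma holder_tail_dist:
  assumes ab: "conjugate_exponents a b" and h: "h \<in> walsh_polys n k"
  shows "cube_avg n (\<lambda>x. f x * h x) \<le> tail_dist n k a f * lnorm n b h"
proof -
  have bound: "cube_avg n (\<lambda>x. f x * h x) \<le> lnorm n a (\<lambda>x. f x - g x) * lnorm n b h"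
    if g: "g \<in> tail_space n k" for g
  proof -
    have "cube_avg n (\<lambda>x. f x * h x) = cube_avg n (\<lambda>x. (f x - g x) * h x)"
      using tail_space_orthogonal[OF g h] by (simp add: left_diff_distrib cube_avg_diff)
    also have "\<dots> \<le> lnorm n a (\<lambda>x. f x - g x) * lnorm n b h"
      by (rule holder[OF ab])
    finally show ?thesis .
  qed
  show ?thesis
  proof (cases "lnorm n b h = 0")
    case True
    then show ?thesis using bound[OF tail_space_zero] by simp
  next
    case False
    then have pos: "0 < lnorm n b h" using lnorm_nonneg[of n b h] by simp
    have "cube_avg n (\<lambda>x. f x * h x) / lnorm n b h \<le> tail_dist n k a f"
      using bound pos by (intro tail_dist_greatest) (simp add: divide_le_eq)
    then show ?thesis using pos by (simp add: divide_le_eq)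
  qed
qed

lemma exists_functional_vanishing_on_tail_space:
  assumes ab: "conjugate_exponents a b"
  obtains W \<phi> where "fun_subspace W" "tail_space n k \<subseteq> W" "f \<in> W" "linear_on \<phi> W"
    "\<And>g. g \<in> tail_space n k \<Longrightarrow> \<phi> g = 0" "\<phi> f = tail_dist n k a f"
    "\<And>u. u \<in> W \<Longrightarrow> \<phi> u \<le> lnorm n a u"
proof -
  define T d where "T = tail_space n k" and "d = tail_dist n k a f"
  have T: "fun_subspace T" unfolding T_def by (rule fun_subspace_tail_space)
  have zero: "linear_on (\<lambda>_. 0) T" by (simp add: linear_on_def)
  have dom: "0 \<le> lnorm n a w" if "w \<in> T" for w by (rule lnorm_nonneg)
  show ?thesis
  proof (cases "f \<in> T")
    case True
    then have "d \<le> lnorm n a (\<lambda>x. f x - f x)"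
      using tail_dist_le[of f n k a f] unfolding d_def T_def by simp
    then have "d = 0"
      using tail_dist_nonneg[of n k a f] lnorm_zero[of n "\<lambda>x. f x - f x" a] by (simp add: d_def)
    then show ?thesis using that[OF T _ True zero _ _ dom] unfolding T_def d_def by simp
  next
    case False
    have lower: "0 - lnorm n a (\<lambda>x. w x - f x) \<le> d" if "w \<in> T" for w
      using lnorm_nonneg[of n a "\<lambda>x. w x - f x"] tail_dist_nonneg[of n k a f] unfolding d_def
      by linarith
    have upper: "d \<le> lnorm n a (\<lambda>x. w x + f x) - 0" if "w \<in> T" for w
      using tail_dist_le[OF tail_space_scale[of w n k "-1"], of a f] that unfolding d_def T_def
      by (simp add: add.commute)
    obtain \<phi> where \<phi>: "linear_on \<phi> (subspace_extend T f)" "\<And>g. g \<in> T \<Longrightarrow> \<phi> g = 0" "\<phi> f = d"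
      "\<And>u. u \<in> subspace_extend T f \<Longrightarrow> \<phi> u \<le> lnorm n a u"
    proof (rule hahn_banach_step[where W=T and \<phi>="\<lambda>_. 0" and S="lnorm n a" and v=f and c=d])
      show "f \<notin> T" by (rule False)
    qed (use T zero sublinear_lnorm[OF ab] dom lower upper in auto)
    show ?thesis
    proof (rule that[OF fun_subspace_extend[OF T] _ in_subspace_extend[OF T] \<phi>(1)])
      show "tail_space n k \<subseteq> subspace_extend T f" unfolding T_def by (rule subset_subspace_extend)
      show "\<phi> g = 0" if "g \<in> tail_space n k" for g using \<phi>(2) that unfolding T_def by simp
      show "\<phi> f = tail_dist n k a f" using \<phi>(3) unfolding d_def .
      show "\<phi> u \<le> lnorm n a u" if "u \<in> subspace_extend T f" for u using \<phi>(4) that .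
    qed
  qed
qed

lemma tail_dist_norming_functional:
  assumes ab: "conjugate_exponents a b"
  obtains W \<psi> where "fun_subspace W" "tail_space n k \<subseteq> W" "f \<in> W"
    "\<And>y. y \<in> cube n \<Longrightarrow> indicator {y} \<in> W" "linear_on \<psi> W"
    "\<And>g. g \<in> tail_space n k \<Longrightarrow> \<psi> g = 0" "\<psi> f = tail_dist n k a f"
    "\<And>u. u \<in> W \<Longrightarrow> \<psi> u \<le> lnorm n a u"
proof -
  obtain W1 \<phi> where W1: "fun_subspace W1" "tail_space n k \<subseteq> W1" "f \<in> W1" "linear_on \<phi> W1"
    "\<And>g. g \<in> tail_space n k \<Longrightarrow> \<phi> g = 0" "\<phi> f = tail_dist n k a f"
    "\<And>u. u \<in> W1 \<Longrightarrow> \<phi> u \<le> lnorm n a u"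
    using exists_functional_vanishing_on_tail_space[OF ab, of n k f] by blast
  obtain W \<psi> where W: "fun_subspace W" "W1 \<subseteq> W" "(\<lambda>y. indicator {y}) ` cube n \<subseteq> W" "linear_on \<psi> W"
    "\<And>w. w \<in> W1 \<Longrightarrow> \<psi> w = \<phi> w" "\<And>u. u \<in> W \<Longrightarrow> \<psi> u \<le> lnorm n a u"
    using hahn_banach_finite[OF finite_imageI[OF finite_cube[of n], of "\<lambda>y. indicator {y}"]
        W1(1,4) sublinear_lnorm[OF ab] W1(7)] by blast
  show ?thesis
  proof (rule that[OF W(1) _ _ _ W(4) _ _ W(6)])
    show "tail_space n k \<subseteq> W" "f \<in> W" using W1(2,3) W(2) by auto
    show "indicator {y} \<in> W" if "y \<in> cube n" for y using W(3) that by auto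
    show "\<psi> g = 0" if "g \<in> tail_space n k" for g using W1(2,5) W(5) that by auto
    show "\<psi> f = tail_dist n k a f" using W1(3,6) W(5) by simp
  qed
qed

text \<open>A functional dominated by an \<open>L\<^sub>r\<close> norm kills functions vanishing on the cube, so it is
  integration against the density \<open>x \<mapsto> 2\<^sup>n \<psi> (indicator {x})\<close>.\<close>
lemma dominated_functional_density:
  assumes W: "fun_subspace W" and ind: "\<And>y. y \<in> cube n \<Longrightarrow> indicator {y} \<in> W"
    and \<psi>: "linear_on \<psi> W" and dom: "\<And>u. u \<in> W \<Longrightarrow> \<psi> u \<le> lnorm n a u" and u: "u \<in> W"
  shows "\<psi> u = cube_avg n (\<lambda>x. u x * (2 ^ n * \<psi> (indicator {x})))"
proof -
  have null: "\<psi> z = 0" if z: "z \<in> W" and "\<And>x. x \<in> cube n \<Longrightarrow> z x = 0" for z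
  proof -
    have z': "(\<lambda>x. (-1) * z x) \<in> W" by (rule fun_subspace_scale[OF W z])
    have "lnorm n a z = 0" "lnorm n a (\<lambda>x. (-1) * z x) = 0"
      using that by (simp_all add: lnorm_zero)
    then have "\<psi> z \<le> 0" "\<psi> (\<lambda>x. (-1) * z x) \<le> 0"
      using dom[OF z] dom[OF z'] by linarith+
    then show ?thesis using linear_on_scale[OF \<psi> z, of "-1"] by linarith
  qed
  show ?thesis
    using linear_on_finite_representation[OF W \<psi> finite_cube ind null u]
    by (simp add: cube_avg_def sum_divide_distrib mult.left_commute)
qed

text \<open>Strong duality; \<open>h\<close> is the density of the Hahn--Banach functional.\<close>
lemma tail_dist_dual_witness:
  assumes ab: "conjugate_exponents a b"
  obtains h where "deg_le n k h" "lnorm n b h \<le> 1" "cube_avg n (\<lambda>x. f x * h x) = tail_dist n k a f"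
proof -
  obtain W \<psi> where W: "fun_subspace W" "tail_space n k \<subseteq> W" "f \<in> W"
    "\<And>y. y \<in> cube n \<Longrightarrow> indicator {y} \<in> W" "linear_on \<psi> W"
    "\<And>g. g \<in> tail_space n k \<Longrightarrow> \<psi> g = 0" "\<psi> f = tail_dist n k a f"
    "\<And>u. u \<in> W \<Longrightarrow> \<psi> u \<le> lnorm n a u"
    using tail_dist_norming_functional[OF ab, of n k f] by blast
  define h where "h x = 2 ^ n * \<psi> (indicator {x})" for x
  have rep: "\<psi> u = cube_avg n (\<lambda>x. u x * h x)" if "u \<in> W" for u
    unfolding h_def by (rule dominated_functional_density[OF W(1,4,5,8) that])
  show ?thesis
  proof
    show "cube_avg n (\<lambda>x. f x * h x) = tail_dist n k a f"
      using rep[OF W(3)] W(7) by simp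
    show "deg_le n k h"
      unfolding deg_le_def
    proof (intro allI impI)
      fix S assume "S \<subseteq> {..<n}" "k < card S"
      then have S: "walsh S \<in> tail_space n k" by (rule walsh_in_tail_space)
      have "fcoeff n h S = cube_avg n (\<lambda>x. walsh S x * h x)"
        by (simp add: fcoeff_def cube_avg_def mult.commute)
      also have "\<dots> = 0" using rep[of "walsh S"] S W(2,6) by auto
      finally show "fcoeff n h S = 0" .
    qed
    obtain w where w: "lnorm n a w \<le> 1" "cube_avg n (\<lambda>x. w x * h x) = lnorm n b h"
      using norming_function[OF conjugate_exponents_sym[OF ab], of n h] by blast
    define V where "V = (\<lambda>x. \<Sum>y\<in>cube n. w y * indicator {y} x)"
    have V: "V \<in> W" unfolding V_def by (rule fun_subspace_interpolant[OF W(1) finite_cube W(4)])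
    have Vw: "V x = w x" if "x \<in> cube n" for x
      unfolding V_def by (rule sum_indicator_interpolant[OF finite_cube that])
    have "lnorm n b h = \<psi> V"
      using w(2) Vw rep[OF V] by (simp cong: cube_avg_cong)
    also have "\<dots> \<le> lnorm n a V" by (rule W(8)[OF V])
    also have "\<dots> = lnorm n a w" by (rule lnorm_cong) (rule Vw)
    finally show "lnorm n b h \<le> 1" using w(1) by simp
  qed
qed

lemma tail_dist_le_of_hypercontractive:
  assumes p: "1 \<le> p" and q: "1 \<le> q" and C: "0 \<le> C"
    and hyp: "\<And>h. deg_le n k h \<Longrightarrow> lnorm n (ereal q) h \<le> C * lnorm n (ereal p) h"
  shows "tail_dist n k (conj_exp p) f \<le> C * tail_dist n k (conj_exp q) f"
proof -
  obtain h where h: "deg_le n k h" "lnorm n (ereal p) h \<le> 1"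
    "cube_avg n (\<lambda>x. f x * h x) = tail_dist n k (conj_exp p) f"
    using tail_dist_dual_witness[OF conjugate_exponents_sym[OF conjugate_exponents_conj_exp[OF p]]]
    by blast
  have "tail_dist n k (conj_exp p) f \<le> tail_dist n k (conj_exp q) f * lnorm n (ereal q) h"
    unfolding h(3)[symmetric]
    by (rule holder_tail_dist[OF conjugate_exponents_sym[OF conjugate_exponents_conj_exp[OF q]]
          deg_le_imp_walsh_polys[OF h(1)]])
  also have "\<dots> \<le> tail_dist n k (conj_exp q) f * C"
  proof (rule mult_left_mono[OF _ tail_dist_nonneg])
    show "lnorm n (ereal q) h \<le> C"
      using hyp[OF h(1)] mult_left_mono[OF h(2) C] by simp
  qed
  finally show ?thesis by (simp add: mult.commute)
qed

lemma hypercontractive_of_tail_dist_le: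
  assumes p: "1 \<le> p" and q: "1 \<le> q"
    and hyp: "\<And>f. tail_dist n k (conj_exp p) f \<le> C * tail_dist n k (conj_exp q) f"
    and h: "deg_le n k h"
  shows "lnorm n (ereal q) h \<le> C * lnorm n (ereal p) h"
proof -
  obtain f where f: "lnorm n (conj_exp q) f \<le> 1" "cube_avg n (\<lambda>x. f x * h x) = lnorm n (ereal q) h"
    using norming_function[OF conjugate_exponents_conj_exp[OF q]] by blast
  have dist_f: "0 \<le> tail_dist n k (conj_exp q) f" "tail_dist n k (conj_exp q) f \<le> 1"
    using tail_dist_nonneg tail_dist_le[OF tail_space_zero, of n k "conj_exp q" f] f(1) by auto
  have "lnorm n (ereal q) h \<le> tail_dist n k (conj_exp p) f * lnorm n (ereal p) h"
    unfolding f(2)[symmetric]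
    by (rule holder_tail_dist[OF conjugate_exponents_sym[OF conjugate_exponents_conj_exp[OF p]]
          deg_le_imp_walsh_polys[OF h]])
  also have "\<dots> \<le> (C * tail_dist n k (conj_exp q) f) * lnorm n (ereal p) h"
    by (rule mult_right_mono[OF hyp lnorm_nonneg])
  finally have bound: "lnorm n (ereal q) h \<le> (C * tail_dist n k (conj_exp q) f) * lnorm n (ereal p) h" .
  show ?thesis
  proof (cases "0 \<le> C")
    case True
    show ?thesis
      by (rule order_trans[OF bound mult_right_mono[OF mult_left_le[OF dist_f(2) True] lnorm_nonneg]])
  next
    case False
    then have "C * tail_dist n k (conj_exp q) f \<le> 0"
      using dist_f(1) by (simp add: mult_nonpos_nonneg)
    then have "lnorm n (ereal q) h \<le> 0"
      using order_trans[OF bound mult_nonpos_nonneg[OF _ lnorm_nonneg]] by blast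
    then have "lnorm n (ereal q) h = 0" using lnorm_nonneg[of n "ereal q" h] by simp
    then have "lnorm n (ereal p) h = 0"
      using lnorm_eq_0_imp[of q n h] q by (intro lnorm_zero) simp
    then show ?thesis using lnorm_nonneg[of n "ereal q" h] \<open>lnorm n (ereal q) h = 0\<close> by simp
  qed
qed

theorem proposition1p1:
  fixes p q :: real and k :: nat
  assumes "1 \<le> p" and "p \<le> q"
  shows "\<exists>M. least_elem {C. \<forall>n\<ge>k. \<forall>f. deg_le n k f \<longrightarrow>
                   lnorm n (ereal q) f \<le> C * lnorm n (ereal p) f} M
           \<and> least_elem {C. \<forall>n\<ge>k. \<forall>f.
                   tail_dist n k (conj_exp p) f \<le> C * tail_dist n k (conj_exp q) f} M"
proof -
  define A1 where "A1 = {C. \<forall>n\<ge>k. \<forall>f. deg_le n k f \<longrightarrow> lnorm n (ereal q) f \<le> C * lnorm n (ereal p) f}"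
  define A2 where "A2 = {C. \<forall>n\<ge>k. \<forall>f. tail_dist n k (conj_exp p) f \<le> C * tail_dist n k (conj_exp q) f}"
  have p: "1 \<le> p" and q: "1 \<le> q" using assms by auto
  have "A1 \<noteq> {}"
    using hypercontractive_constant_exists[OF assms, of k] unfolding A1_def by blast
  have one_le: "1 \<le> C" if "C \<in> A1" for C
  proof -
    have "lnorm k (ereal q) (\<lambda>_. 1) \<le> C * lnorm k (ereal p) (\<lambda>_. 1)"
      using that deg_le_const[of k k 1] unfolding A1_def by blast
    then show ?thesis using p q by (simp add: lnorm_const_1)
  qed
  have "closed A1"
    unfolding A1_def
    by (intro closed_Collect_all closed_Collect_imp closed_Collect_le open_Collect_const continuous_intros)
  moreover have "bdd_below A1" using one_le by (rule bdd_belowI)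
  ultimately have M: "Inf A1 \<in> A1" "\<And>C. C \<in> A1 \<Longrightarrow> Inf A1 \<le> C"
    using \<open>A1 \<noteq> {}\<close> by (auto intro: closed_contains_Inf cInf_lower)
  have "Inf A1 \<in> A2"
    using M(1) one_le[OF M(1)] tail_dist_le_of_hypercontractive[OF p q] unfolding A1_def A2_def by simp
  moreover have "A2 \<subseteq> A1"
    using hypercontractive_of_tail_dist_le[OF p q] unfolding A1_def A2_def by blast
  ultimately show ?thesis
    using M unfolding least_elem_def A1_def[symmetric] A2_def[symmetric] by blast
qed

end
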